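(* Let $\mathcal{H}=\bigotimes_{k=1}^{N}\mathbb{C}^{d_{k}}$ with $D=\dim\mathcal{H}$, and let $\mathcal{B}=\{|\psi_i\rangle\}_{i=1}^{D}$ be a basis of $\mathcal{H}$, not necessarily orthogonal. For each $i$, let $|\tilde{\psi}_i\rangle$ be the unique (up to phase) unit vector in $\mathcal{H}$ orthogonal to every $|\psi_j\rangle$ with $j\neq i$. Let $|\Phi\rangle$ be a pure state in $\mathcal{H}'=\bigotimes_{k=1}^{N}\mathbb{C}^{d'_{k}}$, and let $|\Phi^{*}\rangle$ be its entrywise complex conjugate in the standard basis. Then the set $\{|\Phi\rangle\otimes|\psi_i\rangle\}_{i=1}^{D}\subset\mathcal{H}'\otimes\mathcal{H}$ can be unambiguously distinguished by LOCC if and only if there exists an LOCC protocol (on $\mathcal{H}$-type $N$-partite systems) which transforms $|\Phi^{*}\rangle$ into each $|\tilde{\psi}_i\rangle$ with positive probability. Moreover, if there is an LOCC measurement that unambiguously identifies each $|\Phi\rangle\otimes|\psi_i\rangle$ with probability $\epsilon_i>0$, then there exists an LOCC protocol which transforms $|\Phi^{*}\rangle$ into each $|\tilde{\psi}_i\rangle$ with probability at least $\epsilon_i/D$.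
   Context: $\mathcal{H}'\otimes\mathcal{H}$ is regarded as an $N$-partite system whose $k$-th local subsystem is $\mathbb{C}^{d'_k}\otimes\mathbb{C}^{d_k}$; LOCC (local operations and classical communication) is with respect to this $N$-partite split. A set of states $\{|\Phi\rangle\otimes|\psi_i\rangle\}_{i=1}^{D}$ is unambiguously distinguishable by LOCC if there exists an LOCC-implementable POVM $\{\Pi_i\}_{i=1}^{D+1}$ with $\sum_i\Pi_i=I$ such that for all $i,j\in\{1,\dots,D\}$, $\langle\Phi\otimes\psi_j|\Pi_i|\Phi\otimes\psi_j\rangle=\delta_{ij}\epsilon_i$ with constants $\epsilon_i>0$ (outcome $D+1$ is "inconclusive"); then state $i$ is identified with probability $\epsilon_i$. An LOCC protocol transforms $|\Phi^*\rangle$ into $|\phi\rangle$ with probability $p$ if, acting by LOCC on the $N$ parties holding $|\Phi^*\rangle$, it outputs the state $|\phi\rangle$ (shared among the $N$ parties, with $k$-th party holding the $\mathbb{C}^{d_k}$ factor) with probability $p$. *)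

theory Defs
  imports Complex_Main
begin

text \<open>N-partite systems with local dimensions given by a list ds (N = length ds).
  Vectors are functions on multi-indices; only their values on idx ds matter.\<close>

type_synonym cvec = "nat list \<Rightarrow> complex"
type_synonym cmat = "nat \<Rightarrow> nat \<Rightarrow> complex"

definition idx :: "nat list \<Rightarrow> nat list set" where
  "idx ds = {is. length is = length ds \<and> (\<forall>k<length ds. is ! k < ds ! k)}"

definition cinner :: "nat list \<Rightarrow> cvec \<Rightarrow> cvec \<Rightarrow> complex" where
  "cinner ds u v = (\<Sum>is\<in>idx ds. cnj (u is) * v is)"

definition cnorm2 :: "nat list \<Rightarrow> cvec \<Rightarrow> real" where
  "cnorm2 ds v = Re (cinner ds v v)"

definition outer :: "cvec \<Rightarrow> cvec \<Rightarrow> nat list \<Rightarrow> nat list \<Rightarrow> complex" where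
  "outer u v = (\<lambda>is js. u is * cnj (v js))"

definition conjv :: "cvec \<Rightarrow> cvec" where
  "conjv v = (\<lambda>is. cnj (v is))"

text \<open>Tensor product of a vector on dims d' with a vector on dims d, viewed as an
  N-partite vector whose k-th local space is C^(d'_k) \<otimes> C^(d_k),
  local index j = a * d_k + b.\<close>
definition tensorv :: "nat list \<Rightarrow> cvec \<Rightarrow> cvec \<Rightarrow> cvec" where
  "tensorv d u w = (\<lambda>js. u (map2 (\<lambda>j b. j div b) js d) * w (map2 (\<lambda>j b. j mod b) js d))"

text \<open>Linear operator K : C^(ds!k) \<rightarrow> C^b acting on party k.\<close>
definition apply_local :: "nat list \<Rightarrow> nat \<Rightarrow> cmat \<Rightarrow> cvec \<Rightarrow> cvec" where
  "apply_local ds k K v = (\<lambda>is. \<Sum>j<ds ! k. K (is ! k) j * v (is[k := j]))"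

text \<open>Finite-round LOCC protocols: at each node some party k performs a local
  instrument (Kraus operators K with output dimensions b); the continuation
  depends on all previous outcomes (classical communication).\<close>
datatype locc = Leaf | Node nat "(nat \<times> cmat \<times> locc) list"

inductive wf_locc :: "nat list \<Rightarrow> locc \<Rightarrow> bool" where
  wf_Leaf: "wf_locc ds Leaf"
| wf_Node: "\<lbrakk> k < length ds;
     \<forall>br\<in>set brs. wf_locc (ds[k := fst br]) (snd (snd br));
     \<forall>i<ds ! k. \<forall>j<ds ! k.
        (\<Sum>br\<leftarrow>brs. \<Sum>r<fst br. cnj (fst (snd br) r i) * fst (snd br) r j)
          = (if i = j then 1 else 0) \<rbrakk>
   \<Longrightarrow> wf_locc ds (Node k brs)"

text \<open>The leaves (fine-grained outcomes) of a protocol started on dims ds: output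
  dims and the global Kraus operator of that branch.\<close>
fun leaves :: "nat list \<Rightarrow> locc \<Rightarrow> (nat list \<times> (cvec \<Rightarrow> cvec)) list" where
  "leaves ds Leaf = [(ds, id)]"
| "leaves ds (Node k brs) =
     concat (map (\<lambda>br. map (\<lambda>(ds', F). (ds', F \<circ> apply_local ds k (fst (snd br))))
                          (leaves (ds[k := fst br]) (snd (snd br)))) brs)"

text \<open>LOCC-implementable POVM with outcomes 1..D+1 (D+1 inconclusive) given by a
  labelling of the leaves; unambiguous identification of state v j with
  probability eps j.\<close>
definition locc_unamb_prob :: "nat list \<Rightarrow> nat \<Rightarrow> (nat \<Rightarrow> cvec) \<Rightarrow> (nat \<Rightarrow> real) \<Rightarrow> bool" where
  "locc_unamb_prob ds D v eps \<longleftrightarrow>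
     (\<exists>t lab. wf_locc ds t \<and>
        (let L = leaves ds t in
          (\<forall>l<length L. lab l \<in> {1..D+1}) \<and>
          (\<forall>i\<in>{1..D}. \<forall>j\<in>{1..D}.
             (\<Sum>l | l < length L \<and> lab l = i. cnorm2 (fst (L ! l)) (snd (L ! l) (v j)))
               = (if i = j then eps i else 0))))"

definition locc_unamb_dist :: "nat list \<Rightarrow> nat \<Rightarrow> (nat \<Rightarrow> cvec) \<Rightarrow> bool" where
  "locc_unamb_dist ds D v \<longleftrightarrow> (\<exists>eps. (\<forall>i\<in>{1..D}. eps i > 0) \<and> locc_unamb_prob ds D v eps)"

text \<open>A single LOCC protocol on input dims ds that, on input v, outputs the
  state phi i (on dims dout) with probability p i (outcome i = leaves labelled i).\<close>
definition locc_transforms :: "nat list \<Rightarrow> cvec \<Rightarrow> nat list \<Rightarrow> nat \<Rightarrow> (nat \<Rightarrow> cvec) \<Rightarrow> (nat \<Rightarrow> real) \<Rightarrow> bool" where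
  "locc_transforms ds v dout D phi p \<longleftrightarrow>
     (\<exists>t lab. wf_locc ds t \<and>
        (let L = leaves ds t in
          \<forall>i\<in>{1..D}.
            (\<forall>l<length L. lab l = i \<longrightarrow> fst (L ! l) = dout) \<and>
            (\<forall>is\<in>idx dout. \<forall>js\<in>idx dout.
               (\<Sum>l | l < length L \<and> lab l = i. outer (snd (L ! l) v) (snd (L ! l) v) is js)
                 = complex_of_real (p i) * outer (phi i) (phi i) is js)))"

end

theory Submission
  imports Defs "HOL-Library.Function_Algebras"
begin

text \<open>Both directions rest on the maximally entangled vector on two copies of H. Suppose the parties
  hold \<Phi>* together with the first halves of such pairs, apply the complex conjugate of an operator G
  (a branch of an LOCC protocol on H' \<otimes> H) and project the result onto a computational basis vector e.
  Then the second halves are left in a vector v with \<langle>w, v\<rangle> = cnj ((G (\<Phi> \<otimes> w)) e) / sqrt D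
  for every w in H.

  Forward: run the conjugated discrimination protocol on \<Phi>* and the first halves of such pairs and
  read out in the computational basis. On a leaf claiming state i the remaining halves are orthogonal
  to every \<psi> j with j \<noteq> i, hence proportional to the dual vector of \<psi> i, with weight at least
  \<epsilon> i / D because the overlap of \<psi> i with its dual vector is at most 1.

  Backward: run the conjugated transformation protocol on the \<Phi>-part of \<Phi> \<otimes> \<psi> j and test each
  party's two output registers for the maximally entangled vector. The success probability on leaves
  labelled i is p i |\<langle>dual vector of \<psi> i, \<psi> j\<rangle>|^2 / D, which is positive for j = i and vanishes
  otherwise.\<close>

section \<open>Multi-indices\<close>

lemma idx_Nil[simp]: "idx [] = {[]}"
  by (auto simp: idx_def)

lemma idx_Cons: "idx (x#xs) = (\<lambda>(j,as). j#as) ` ({..<x} \<times> idx xs)"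
proof (rule set_eqI)
  fix ys show "ys \<in> idx (x#xs) \<longleftrightarrow> ys \<in> (\<lambda>(j,as). j#as) ` ({..<x} \<times> idx xs)"
  proof (cases ys)
    case Nil then show ?thesis by (auto simp: idx_def)
  next
    case (Cons y zs)
    have "ys \<in> idx (x#xs) \<longleftrightarrow> y < x \<and> zs \<in> idx xs"
      unfolding idx_def Cons by (auto simp: nth_Cons split: nat.splits)
    then show ?thesis using Cons by auto
  qed
qed

lemma sum_idx_Cons: "(\<Sum>is\<in>idx (x#xs). f is) = (\<Sum>j<x. \<Sum>as\<in>idx xs. f (j#as))"
proof -
  have inj: "inj_on (\<lambda>(j,as). j#as) ({..<x} \<times> idx xs)" by (auto simp: inj_on_def)
  have "(\<Sum>is\<in>idx (x#xs). f is) = (\<Sum>p\<in>{..<x} \<times> idx xs. f (fst p # snd p))"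
    unfolding idx_Cons by (subst sum.reindex[OF inj]) (simp add: case_prod_beta)
  also have "\<dots> = (\<Sum>j<x. \<Sum>as\<in>idx xs. f (j#as))"
    by (simp add: sum.cartesian_product case_prod_beta)
  finally show ?thesis .
qed

lemma finite_idx[simp]: "finite (idx xs)"
  by (induction xs) (simp_all add: idx_Cons)

lemma card_idx: "card (idx xs) = prod_list xs"
proof (induction xs)
  case Nil then show ?case by simp
next
  case (Cons a xs)
  have "card (idx (a#xs)) = (\<Sum>is\<in>idx (a#xs). 1)" by simp
  also have "\<dots> = (\<Sum>j<a. \<Sum>as\<in>idx xs. (1::nat))" by (rule sum_idx_Cons)
  finally show ?case using Cons by simp
qed

lemma idx_length: "is \<in> idx ds \<Longrightarrow> length is = length ds" by (simp add: idx_def)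
lemma idx_nth: "is \<in> idx ds \<Longrightarrow> k < length ds \<Longrightarrow> is ! k < ds ! k" by (simp add: idx_def)
lemma idx_update_in_idx: "is \<in> idx (ds[k:=b]) \<Longrightarrow> k < length ds \<Longrightarrow> j < ds!k \<Longrightarrow> is[k:=j] \<in> idx ds"
  by (auto simp: idx_def nth_list_update)

section \<open>Operators given by matrices\<close>

definition matrix_map :: "nat list \<Rightarrow> nat list \<Rightarrow> (cvec \<Rightarrow> cvec) \<Rightarrow> bool" where
  "matrix_map ds ds' F \<longleftrightarrow> (\<exists>M. \<forall>v. \<forall>y\<in>idx ds'. F v y = (\<Sum>x\<in>idx ds. M y x * v x))"

lemma matrix_map_id: "matrix_map ds ds id"
  unfolding matrix_map_def
proof (intro exI[of _ "\<lambda>y x. if x = y then 1 else 0"] allI ballI)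
  fix v :: cvec and y assume "y \<in> idx ds"
  have "(\<Sum>x\<in>idx ds. (if x = y then 1 else 0) * v x) = (\<Sum>x\<in>idx ds. (if x = y then v x else 0))"
    by (intro sum.cong) auto
  also have "\<dots> = v y" using \<open>y \<in> idx ds\<close> by (simp add: sum.delta')
  finally show "id v y = (\<Sum>x\<in>idx ds. (if x = y then 1 else 0) * v x)" by simp
qed

lemma matrix_map_comp:
  assumes G: "matrix_map ds1 ds2 G" and F: "matrix_map ds2 ds3 F"
  shows "matrix_map ds1 ds3 (F \<circ> G)"
proof -
  obtain N where N: "\<And>v y. y\<in>idx ds2 \<Longrightarrow> G v y = (\<Sum>x\<in>idx ds1. N y x * v x)"
    using G unfolding matrix_map_def by blast
  obtain M where M: "\<And>v y. y\<in>idx ds3 \<Longrightarrow> F v y = (\<Sum>x\<in>idx ds2. M y x * v x)"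
    using F unfolding matrix_map_def by blast
  have "(F \<circ> G) v y = (\<Sum>z\<in>idx ds1. (\<Sum>x\<in>idx ds2. M y x * N x z) * v z)" if "y \<in> idx ds3" for v y
  proof -
    have "(F \<circ> G) v y = (\<Sum>x\<in>idx ds2. M y x * (\<Sum>z\<in>idx ds1. N x z * v z))"
      using M[OF that] N by simp
    also have "\<dots> = (\<Sum>x\<in>idx ds2. \<Sum>z\<in>idx ds1. M y x * N x z * v z)"
      by (simp add: sum_distrib_left mult.assoc)
    also have "\<dots> = (\<Sum>z\<in>idx ds1. \<Sum>x\<in>idx ds2. M y x * N x z * v z)"
      by (rule sum.swap)
    also have "\<dots> = (\<Sum>z\<in>idx ds1. (\<Sum>x\<in>idx ds2. M y x * N x z) * v z)"
      by (simp add: sum_distrib_right)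
    finally show ?thesis .
  qed
  then show ?thesis unfolding matrix_map_def
    by (intro exI[of _ "\<lambda>y z. \<Sum>x\<in>idx ds2. M y x * N x z"]) blast
qed

lemma matrix_map_apply_local:
  assumes k: "k < length ds"
  shows "matrix_map ds (ds[k:=b]) (apply_local ds k K)"
proof -
  define M where "M y x = (if length x = length y \<and> (\<forall>k'. k' \<noteq> k \<longrightarrow> x!k' = y!k') then K (y!k) (x!k) else 0)" for y x :: "nat list"
  have "apply_local ds k K v y = (\<Sum>x\<in>idx ds. M y x * v x)" if y: "y \<in> idx (ds[k:=b])" for v y
  proof -
    have ly: "length y = length ds" using y idx_length by fastforce
    have inj: "inj_on (\<lambda>j. y[k:=j]) {..<ds!k}"
      by (auto simp: inj_on_def) (metis k ly nth_list_update_eq)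
    have sub: "(\<lambda>j. y[k:=j]) ` {..<ds!k} \<subseteq> idx ds"
      using idx_update_in_idx[OF y k] by auto
    have zero: "\<forall>x\<in>idx ds - (\<lambda>j. y[k:=j]) ` {..<ds!k}. M y x * v x = 0"
    proof
      fix x assume x: "x \<in> idx ds - (\<lambda>j. y[k:=j]) ` {..<ds!k}"
      show "M y x * v x = 0"
      proof (cases "length x = length y \<and> (\<forall>k'. k' \<noteq> k \<longrightarrow> x!k' = y!k')")
        case True
        have "x = y[k := x!k]"
          by (rule nth_equalityI) (use True k ly in \<open>auto simp: nth_list_update\<close>)
        moreover have "x!k < ds!k" using x k idx_nth by blast
        ultimately have False using x by blast
        then show ?thesis ..
      qed (auto simp: M_def)
    qed
    have "(\<Sum>x\<in>idx ds. M y x * v x) = (\<Sum>x\<in>(\<lambda>j. y[k:=j]) ` {..<ds!k}. M y x * v x)"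
      by (rule sum.mono_neutral_right[OF finite_idx sub zero])
    also have "\<dots> = (\<Sum>j<ds!k. M y (y[k:=j]) * v (y[k:=j]))"
      by (subst sum.reindex[OF inj]) simp
    also have "\<dots> = (\<Sum>j<ds!k. K (y!k) j * v (y[k:=j]))"
      using k ly by (intro sum.cong) (auto simp: M_def nth_list_update)
    finally show ?thesis by (simp add: apply_local_def)
  qed
  then show ?thesis unfolding matrix_map_def by blast
qed

lemma matrix_map_leaves:
  "wf_locc ds t \<Longrightarrow> (ds', F) \<in> set (leaves ds t) \<Longrightarrow> matrix_map ds ds' F \<and> length ds' = length ds"
proof (induction arbitrary: ds' F rule: wf_locc.induct)
  case (wf_Leaf ds) then show ?case using matrix_map_id[of ds] by (auto simp: id_def)
next
  case (wf_Node k ds brs)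
  from wf_Node.prems obtain br ds0 F0 where br: "br \<in> set brs"
     and l: "(ds0, F0) \<in> set (leaves (ds[k := fst br]) (snd (snd br)))"
     and eq: "ds' = ds0" "F = F0 \<circ> apply_local ds k (fst (snd br))"
    by auto
  have "matrix_map (ds[k := fst br]) ds0 F0 \<and> length ds0 = length (ds[k := fst br])"
    using wf_Node.IH br l by blast
  moreover have "matrix_map ds ds0 (F0 \<circ> apply_local ds k (fst (snd br)))"
    by (rule matrix_map_comp[OF matrix_map_apply_local[OF wf_Node.hyps(1)]]) (use calculation in blast)
  ultimately show ?case unfolding eq by (simp del: comp_apply add: comp_def[symmetric])
qed

lemma matrix_map_cong: "matrix_map ds ds' F \<Longrightarrow> (\<And>x. x \<in> idx ds \<Longrightarrow> v x = w x) \<Longrightarrow> y \<in> idx ds' \<Longrightarrow> F v y = F w y"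
  unfolding matrix_map_def by (metis (no_types, lifting) sum.cong)

lemma matrix_map_sum: "matrix_map ds ds' F \<Longrightarrow> finite B \<Longrightarrow> y \<in> idx ds' \<Longrightarrow>
   F (\<lambda>x. \<Sum>b\<in>B. c b * u b x) y = (\<Sum>b\<in>B. c b * F (u b) y)"
proof -
  assume "matrix_map ds ds' F" "finite B" "y \<in> idx ds'"
  then obtain M where M: "\<And>v. F v y = (\<Sum>x\<in>idx ds. M y x * v x)" unfolding matrix_map_def by blast
  show ?thesis unfolding M
    by (simp add: sum_distrib_left mult.left_commute sum.swap[of _ B])
qed

lemma matrix_map_scale: "matrix_map ds ds' F \<Longrightarrow> y \<in> idx ds' \<Longrightarrow> F (\<lambda>x. c * u x) y = c * F u y"
  using matrix_map_sum[of ds ds' F "{0::nat}" y "\<lambda>_. c" "\<lambda>_. u"] by simp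

section \<open>Combinators on protocols\<close>

fun conj_locc :: "locc \<Rightarrow> locc" where
  "conj_locc Leaf = Leaf"
| "conj_locc (Node k brs) = Node k (map (\<lambda>br. (fst br, (\<lambda>r j. cnj (fst (snd br) r j)), conj_locc (snd (snd br)))) brs)"

lemma cnj_sum_list: "cnj (sum_list (map f xs)) = sum_list (map (\<lambda>x. cnj (f x)) xs)"
  by (induction xs) auto

lemma apply_local_cnj: "apply_local ds k (\<lambda>r j. cnj (K r j)) v = conjv (apply_local ds k K (conjv v))"
  by (simp add: apply_local_def conjv_def)

lemma leaves_conj_locc: "leaves ds (conj_locc t) = map (\<lambda>(ds', F). (ds', conjv \<circ> F \<circ> conjv)) (leaves ds t)"
proof (induction t arbitrary: ds)
  case Leaf then show ?case by (simp add: fun_eq_iff conjv_def)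
next
  case (Node k brs)
  have IH: "\<And>br. br \<in> set brs \<Longrightarrow> leaves (ds[k := fst br]) (conj_locc (snd (snd br))) =
      map (\<lambda>(ds', F). (ds', conjv \<circ> F \<circ> conjv)) (leaves (ds[k := fst br]) (snd (snd br)))"
    using Node.IH by (case_tac br) fastforce
  show ?case
    by (simp add: IH map_concat cong: map_cong)
      (auto intro!: arg_cong[where f=concat] map_cong simp: fun_eq_iff apply_local_cnj conjv_def)
qed

lemma wf_locc_conj_locc: "wf_locc ds t \<Longrightarrow> wf_locc ds (conj_locc t)"
proof (induction rule: wf_locc.induct)
  case (wf_Leaf ds) then show ?case by (simp add: wf_locc.wf_Leaf)
next
  case (wf_Node k ds brs)
  show ?case
  proof (simp, rule wf_locc.wf_Node)
    show "k < length ds" by fact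
    show "\<forall>br\<in>set (map (\<lambda>br. (fst br, \<lambda>r j. cnj (fst (snd br) r j), conj_locc (snd (snd br)))) brs).
        wf_locc (ds[k := fst br]) (snd (snd br))" using wf_Node.IH by auto
    show "\<forall>i<ds ! k. \<forall>j<ds ! k.
       (\<Sum>br\<leftarrow>map (\<lambda>br. (fst br, \<lambda>r j. cnj (fst (snd br) r j), conj_locc (snd (snd br)))) brs.
          \<Sum>r<fst br. cnj (fst (snd br) r i) * fst (snd br) r j) = (if i = j then 1 else 0)"
    proof (intro allI impI)
      fix i j assume ij: "i < ds!k" "j < ds!k"
      have "cnj (\<Sum>br\<leftarrow>brs. \<Sum>r<fst br. cnj (fst (snd br) r i) * fst (snd br) r j) = cnj (if i = j then 1 else 0)"
        using wf_Node.hyps(2) ij by simp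
      then show "(\<Sum>br\<leftarrow>map (\<lambda>br. (fst br, \<lambda>r j. cnj (fst (snd br) r j), conj_locc (snd (snd br)))) brs.
          \<Sum>r<fst br. cnj (fst (snd br) r i) * fst (snd br) r j) = (if i = j then 1 else 0)"
        by (simp add: cnj_sum_list o_def mult.commute)
    qed
  qed
qed

text \<open>K \<otimes> 1 : C^a \<otimes> C^n \<rightarrow> C^b \<otimes> C^n, the basis vector (c, s) having local index c * n + s.\<close>
definition lift_kraus :: "nat \<Rightarrow> cmat \<Rightarrow> cmat" where
  "lift_kraus dk K = (\<lambda>r j. if r mod dk = j mod dk then K (r div dk) (j div dk) else 0)"

fun lift_locc :: "nat list \<Rightarrow> locc \<Rightarrow> locc" where
  "lift_locc d Leaf = Leaf"
| "lift_locc d (Node k brs) = Node k (map (\<lambda>br. (fst br * d!k, lift_kraus (d!k) (fst (snd br)), lift_locc d (snd (snd br)))) brs)"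

definition idx_join :: "nat list \<Rightarrow> nat list \<Rightarrow> nat list \<Rightarrow> nat list" where
  "idx_join d is bs = map (\<lambda>k. is!k * d!k + bs!k) [0..<length d]"

lemma sum_lessThan_mult_split:
  assumes "(dk::nat) > 0"
  shows "(\<Sum>r<b*dk. g r) = (\<Sum>c<b. \<Sum>s<dk. g (c*dk+s))"
proof -
  have inj: "inj_on (\<lambda>(c,s). c*dk+s) ({..<b}\<times>{..<dk})"
  proof (rule inj_onI, clarsimp)
    fix c s c' s' assume "s < dk" "s' < dk" "c*dk+s = c'*dk+s'"
    then have "(c*dk+s) div dk = (c'*dk+s') div dk" "(c*dk+s) mod dk = (c'*dk+s') mod dk" by auto
    then show "c = c' \<and> s = s'" using \<open>s<dk\<close> \<open>s'<dk\<close> assms by simp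
  qed
  have im: "(\<lambda>(c,s). c*dk+s) ` ({..<b}\<times>{..<dk}) = {..<b*dk}"
  proof (rule set_eqI, rule iffI)
    fix r assume "r \<in> (\<lambda>(c,s). c*dk+s) ` ({..<b}\<times>{..<dk})"
    then obtain c s where "c<b" "s<dk" "r = c*dk+s" by auto
    then have "r < (c+1)*dk" by simp
    also have "\<dots> \<le> b*dk" using \<open>c<b\<close> by (intro mult_right_mono) auto
    finally show "r \<in> {..<b*dk}" by simp
  next
    fix r assume "r \<in> {..<b*dk}"
    then have "r div dk < b" by (simp add: div_less_iff_less_mult assms)
    moreover have "r = (r div dk)*dk + r mod dk" by simp
    moreover have "r mod dk < dk" using assms by simp
    ultimately show "r \<in> (\<lambda>(c,s). c*dk+s) ` ({..<b}\<times>{..<dk})"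
      by (metis (no_types, lifting) SigmaI case_prod_conv image_eqI lessThan_iff)
  qed
  have "(\<Sum>r<b*dk. g r) = (\<Sum>p\<in>{..<b}\<times>{..<dk}. g (fst p*dk+snd p))"
    unfolding im[symmetric] by (subst sum.reindex[OF inj]) (simp add: case_prod_beta)
  also have "\<dots> = (\<Sum>c<b. \<Sum>s<dk. g (c*dk+s))"
    by (simp add: sum.cartesian_product case_prod_beta)
  finally show ?thesis .
qed

lemma lift_kraus_gram:
  assumes n: "n > 0"
  shows "(\<Sum>r<b * n. cnj (lift_kraus n K r i) * lift_kraus n K r j)
           = (if i mod n = j mod n then (\<Sum>c<b. cnj (K c (i div n)) * K c (j div n)) else 0)"
proof -
  have "(\<Sum>r<b * n. cnj (lift_kraus n K r i) * lift_kraus n K r j)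
      = (\<Sum>c<b. \<Sum>s<n. cnj (lift_kraus n K (c*n+s) i) * lift_kraus n K (c*n+s) j)"
    by (rule sum_lessThan_mult_split[OF n])
  also have "\<dots> = (\<Sum>c<b. \<Sum>s<n. if s = i mod n then
                     (if i mod n = j mod n then cnj (K c (i div n)) * K c (j div n) else 0) else 0)"
    using n by (intro sum.cong refl) (auto simp: lift_kraus_def)
  also have "\<dots> = (\<Sum>c<b. if i mod n = j mod n then cnj (K c (i div n)) * K c (j div n) else 0)"
    using n by (simp add: sum.delta)
  finally show ?thesis by simp
qed

lemma wf_locc_lift_locc:
  "wf_locc m t \<Longrightarrow> length m = length d \<Longrightarrow> (\<forall>k<length d. d!k > 0) \<Longrightarrow> wf_locc (map2 (*) m d) (lift_locc d t)"
proof (induction rule: wf_locc.induct)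
  case (wf_Leaf ds) then show ?case by (simp add: wf_locc.wf_Leaf)
next
  case (wf_Node k ds brs)
  have dk: "d!k > 0" using wf_Node by auto
  have upd: "(map2 (*) ds d)[k := b * d!k] = map2 (*) (ds[k:=b]) d" for b
    using wf_Node.hyps(1) wf_Node.prems(1) by (intro nth_equalityI) (auto simp: nth_list_update)
  show ?case
  proof (simp, rule wf_locc.wf_Node)
    show "k < length (map2 (*) ds d)" using wf_Node by simp
    show "\<forall>br\<in>set (map (\<lambda>br. (fst br * d ! k, lift_kraus (d ! k) (fst (snd br)), lift_locc d (snd (snd br)))) brs).
       wf_locc ((map2 (*) ds d)[k := fst br]) (snd (snd br))"
      using wf_Node.IH wf_Node.prems by (auto simp: upd)
    show "\<forall>i<map2 (*) ds d ! k. \<forall>j<map2 (*) ds d ! k.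
       (\<Sum>br\<leftarrow>map (\<lambda>br. (fst br * d ! k, lift_kraus (d ! k) (fst (snd br)), lift_locc d (snd (snd br)))) brs.
           \<Sum>r<fst br. cnj (fst (snd br) r i) * fst (snd br) r j) = (if i = j then 1 else 0)"
    proof (intro allI impI)
      fix i j assume "i < map2 (*) ds d ! k" "j < map2 (*) ds d ! k"
      then have ij': "i < ds!k * d!k" "j < ds!k * d!k" using wf_Node by auto
      have idiv: "i div d!k < ds!k" "j div d!k < ds!k" using ij' dk
        by (simp_all add: div_less_iff_less_mult)
      have "(\<Sum>br\<leftarrow>map (\<lambda>br. (fst br * d ! k, lift_kraus (d ! k) (fst (snd br)), lift_locc d (snd (snd br)))) brs.
           \<Sum>r<fst br. cnj (fst (snd br) r i) * fst (snd br) r j)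
        = (\<Sum>br\<leftarrow>brs. if i mod d!k = j mod d!k then (\<Sum>c<fst br. cnj (fst (snd br) c (i div d!k)) * fst (snd br) c (j div d!k)) else 0)"
        by (simp add: o_def lift_kraus_gram[OF dk])
      also have "\<dots> = (if i mod d!k = j mod d!k then (\<Sum>br\<leftarrow>brs. \<Sum>c<fst br. cnj (fst (snd br) c (i div d!k)) * fst (snd br) c (j div d!k)) else 0)"
        by (induction brs) auto
      also have "\<dots> = (if i mod d!k = j mod d!k \<and> i div d!k = j div d!k then 1 else 0)"
        using wf_Node.hyps(2) idiv by auto
      also have "\<dots> = (if i = j then 1 else 0)"
        by (metis div_mult_mod_eq)
      finally show "(\<Sum>br\<leftarrow>map (\<lambda>br. (fst br * d ! k, lift_kraus (d ! k) (fst (snd br)), lift_locc d (snd (snd br)))) brs.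
           \<Sum>r<fst br. cnj (fst (snd br) r i) * fst (snd br) r j) = (if i = j then 1 else 0)" .
    qed
  qed
qed

lemma idx_join_nth[simp]: "k < length d \<Longrightarrow> idx_join d is bs ! k = is!k * d!k + bs!k"
  by (simp add: idx_join_def)
lemma length_idx_join[simp]: "length (idx_join d is bs) = length d"
  by (simp add: idx_join_def)

lemma idx_join_in_idx:
  assumes "is \<in> idx m" "bs \<in> idx d" "length m = length d"
  shows "idx_join d is bs \<in> idx (map2 (*) m d)"
proof -
  have "is!k * d!k + bs!k < m!k * d!k" if "k < length d" for k
  proof -
    have "is!k < m!k" "bs!k < d!k" using assms that by (auto simp: idx_def)
    then have "is!k * d!k + bs!k < (is!k + 1) * d!k" by simp
    also have "\<dots> \<le> m!k * d!k" using \<open>is!k < m!k\<close> by (intro mult_right_mono) auto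
    finally show ?thesis .
  qed
  then show ?thesis using assms by (auto simp: idx_def)
qed

lemma idx_join_update:
  assumes "k < length d" "length is = length d"
  shows "(idx_join d is bs)[k := c * d!k + bs!k] = idx_join d (is[k:=c]) bs"
  using assms by (intro nth_equalityI) (auto simp: nth_list_update idx_join_def)

lemma apply_local_lift_kraus:
  assumes k: "k < length m" and len: "length m = length d" and dk: "d!k > 0"
    and is_: "is \<in> idx (m[k:=b])" and bs: "bs \<in> idx d"
  shows "apply_local (map2 (*) m d) k (lift_kraus (d!k) K) w (idx_join d is bs)
         = apply_local m k K (\<lambda>is'. w (idx_join d is' bs)) is"
proof -
  have lis: "length is = length d" using is_ len idx_length by fastforce
  have bsk: "bs!k < d!k" using bs k len idx_nth by fastforce
  have "apply_local (map2 (*) m d) k (lift_kraus (d!k) K) w (idx_join d is bs)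
      = (\<Sum>j<m!k * d!k. lift_kraus (d!k) K (is!k * d!k + bs!k) j * w ((idx_join d is bs)[k:=j]))"
    using k len by (simp add: apply_local_def)
  also have "\<dots> = (\<Sum>c<m!k. \<Sum>s<d!k. lift_kraus (d!k) K (is!k * d!k + bs!k) (c*d!k+s) * w ((idx_join d is bs)[k:=c*d!k+s]))"
    by (rule sum_lessThan_mult_split[OF dk])
  also have "\<dots> = (\<Sum>c<m!k. \<Sum>s<d!k. if s = bs!k then K (is!k) c * w ((idx_join d is bs)[k:=c*d!k+bs!k]) else 0)"
    using dk bsk by (intro sum.cong refl) (auto simp: lift_kraus_def)
  also have "\<dots> = (\<Sum>c<m!k. K (is!k) c * w (idx_join d (is[k:=c]) bs))"
    using bsk k len lis by (simp add: sum.delta idx_join_update)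
  also have "\<dots> = apply_local m k K (\<lambda>is'. w (idx_join d is' bs)) is"
    by (simp add: apply_local_def)
  finally show ?thesis .
qed

lemma list_all2_concat: "list_all2 (list_all2 R) xss yss \<Longrightarrow> list_all2 R (concat xss) (concat yss)"
  by (induction xss yss rule: list_all2_induct) (auto intro: list_all2_appendI)

lemma list_all2_set2: "list_all2 R xs ys \<Longrightarrow> list_all2 (\<lambda>x y. R x y \<and> y \<in> set ys) xs ys"
  by (auto simp: list_all2_conv_all_nth)

definition lifted_leaf :: "nat list \<Rightarrow> (nat list \<times> (cvec \<Rightarrow> cvec)) \<Rightarrow> (nat list \<times> (cvec \<Rightarrow> cvec)) \<Rightarrow> bool" where
  "lifted_leaf d p q \<longleftrightarrow> fst p = map2 (*) (fst q) d \<and>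
     (\<forall>w. \<forall>is\<in>idx (fst q). \<forall>bs\<in>idx d. snd p w (idx_join d is bs) = snd q (\<lambda>is'. w (idx_join d is' bs)) is)"

lemma leaves_lift_locc:
  "wf_locc m t \<Longrightarrow> length m = length d \<Longrightarrow> (\<forall>k<length d. d!k > 0) \<Longrightarrow>
   list_all2 (lifted_leaf d) (leaves (map2 (*) m d) (lift_locc d t)) (leaves m t)"
proof (induction rule: wf_locc.induct)
  case (wf_Leaf ds) then show ?case by (simp add: lifted_leaf_def)
next
  case (wf_Node k ds brs)
  have dk: "d!k > 0" using wf_Node by auto
  have k: "k < length ds" by fact
  have upd: "(map2 (*) ds d)[k := b * d!k] = map2 (*) (ds[k:=b]) d" for b
    using wf_Node.hyps(1) wf_Node.prems(1) by (intro nth_equalityI) (auto simp: nth_list_update)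
  have step: "list_all2 (lifted_leaf d)
      (map (\<lambda>(ds', F). (ds', F \<circ> apply_local (map2 (*) ds d) k (lift_kraus (d!k) (fst (snd br)))))
        (leaves ((map2 (*) ds d)[k := fst br * d!k]) (lift_locc d (snd (snd br)))))
      (map (\<lambda>(ds', F). (ds', F \<circ> apply_local ds k (fst (snd br)))) (leaves (ds[k := fst br]) (snd (snd br))))"
    if br: "br \<in> set brs" for br
  proof -
    have wfc: "wf_locc (ds[k := fst br]) (snd (snd br))" using wf_Node.IH br by blast
    have IH: "list_all2 (lifted_leaf d) (leaves (map2 (*) (ds[k := fst br]) d) (lift_locc d (snd (snd br))))
        (leaves (ds[k := fst br]) (snd (snd br)))"
      using wf_Node.IH br wf_Node.prems by auto
    show ?thesis unfolding upd list_all2_map1 list_all2_map2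
    proof (rule list_all2_mono[OF list_all2_set2[OF IH]])
      fix p q assume pq': "lifted_leaf d p q \<and> q \<in> set (leaves (ds[k := fst br]) (snd (snd br)))"
      then have pq: "lifted_leaf d p q" and qin: "q \<in> set (leaves (ds[k := fst br]) (snd (snd br)))" by auto
      obtain m1 F1 where p: "p = (m1, F1)" by force
      obtain m2 F2 where q: "q = (m2, F2)" by force
      have mr: "matrix_map (ds[k := fst br]) m2 F2" using matrix_map_leaves[OF wfc] qin q by blast
      show "lifted_leaf d (case p of (ds', F) \<Rightarrow> (ds', F \<circ> apply_local (map2 (*) ds d) k (lift_kraus (d ! k) (fst (snd br)))))
                 (case q of (ds', F) \<Rightarrow> (ds', F \<circ> apply_local ds k (fst (snd br))))"
        unfolding p q lifted_leaf_def
      proof (simp, intro conjI allI ballI)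
        show "m1 = map2 (*) m2 d" using pq p q by (simp add: lifted_leaf_def)
        fix w ii bs assume is_: "ii \<in> idx m2" and bs: "bs \<in> idx d"
        have "F1 (apply_local (map2 (*) ds d) k (lift_kraus (d ! k) (fst (snd br))) w) (idx_join d ii bs)
           = F2 (\<lambda>is'. apply_local (map2 (*) ds d) k (lift_kraus (d ! k) (fst (snd br))) w (idx_join d is' bs)) ii"
          using pq is_ bs p q by (simp add: lifted_leaf_def)
        also have "\<dots> = F2 (apply_local ds k (fst (snd br)) (\<lambda>is'. w (idx_join d is' bs))) ii"
          by (rule matrix_map_cong[OF mr _ is_], rule apply_local_lift_kraus[OF k wf_Node.prems(1) dk _ bs])
        finally show "F1 (apply_local (map2 (*) ds d) k (lift_kraus (d ! k) (fst (snd br))) w) (idx_join d ii bs)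
           = F2 (apply_local ds k (fst (snd br)) (\<lambda>is'. w (idx_join d is' bs))) ii" .
      qed
    qed
  qed
  show ?case
    using step[unfolded list_all2_map1 list_all2_map2]
    by (simp, intro list_all2_concat) (simp add: list_all2_map1 list_all2_map2 list_all2_same)
qed

fun graft :: "nat list \<Rightarrow> locc \<Rightarrow> (nat list \<Rightarrow> locc) \<Rightarrow> locc" where
  "graft ds Leaf g = g ds"
| "graft ds (Node k brs) g = Node k (map (\<lambda>br. (fst br, fst (snd br), graft (ds[k := fst br]) (snd (snd br)) g)) brs)"

lemma concat_concat: "concat (concat xss) = concat (map concat xss)"
  by (induction xss) auto

lemma leaves_graft:
  "leaves ds (graft ds t g) = concat (map (\<lambda>(ds', F). map (\<lambda>(e, G). (e, G \<circ> F)) (leaves ds' (g ds'))) (leaves ds t))"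
proof (induction t arbitrary: ds)
  case Leaf
  then show ?case by (simp add: case_prod_beta)
next
  case (Node k brs)
  have IH: "\<And>br. br \<in> set brs \<Longrightarrow> leaves (ds[k := fst br]) (graft (ds[k := fst br]) (snd (snd br)) g) =
     concat (map (\<lambda>(ds', F). map (\<lambda>(e, G). (e, G \<circ> F)) (leaves ds' (g ds'))) (leaves (ds[k := fst br]) (snd (snd br))))"
    using Node.IH by (case_tac br) fastforce
  show ?case
    by (simp add: IH map_concat o_def case_prod_beta comp_assoc concat_concat cong: map_cong)
qed

lemma wf_locc_graft:
  "wf_locc ds t \<Longrightarrow> (\<forall>p\<in>set (leaves ds t). wf_locc (fst p) (g (fst p))) \<Longrightarrow> wf_locc ds (graft ds t g)"
proof (induction rule: wf_locc.induct)
  case (wf_Leaf ds) then show ?case by simp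
next
  case (wf_Node k ds brs)
  show ?case
  proof (simp, rule wf_locc.wf_Node)
    show "k < length ds" by fact
    show "\<forall>i<ds ! k. \<forall>j<ds ! k.
       (\<Sum>br\<leftarrow>map (\<lambda>br. (fst br, fst (snd br), graft (ds[k := fst br]) (snd (snd br)) g)) brs.
           \<Sum>r<fst br. cnj (fst (snd br) r i) * fst (snd br) r j) = (if i = j then 1 else 0)"
      using wf_Node.hyps(2) by (simp add: o_def)
    show "\<forall>br\<in>set (map (\<lambda>br. (fst br, fst (snd br), graft (ds[k := fst br]) (snd (snd br)) g)) brs).
       wf_locc (ds[k := fst br]) (snd (snd br))"
    proof
      fix br' assume "br' \<in> set (map (\<lambda>br. (fst br, fst (snd br), graft (ds[k := fst br]) (snd (snd br)) g)) brs)"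
      then obtain br where br: "br \<in> set brs" and e: "br' = (fst br, fst (snd br), graft (ds[k := fst br]) (snd (snd br)) g)" by auto
      have "\<forall>p\<in>set (leaves (ds[k := fst br]) (snd (snd br))). wf_locc (fst p) (g (fst p))"
        using wf_Node.prems br by fastforce
      then show "wf_locc (ds[k := fst br']) (snd (snd br'))" using wf_Node.IH br e by auto
    qed
  qed
qed

fun chain :: "(nat \<Rightarrow> (nat \<times> cmat) list) \<Rightarrow> nat \<Rightarrow> nat \<Rightarrow> locc" where
  "chain B k 0 = Leaf"
| "chain B k (Suc n) = Node k (map (\<lambda>x. (fst x, snd x, chain B (Suc k) n)) (B k))"

fun chain_dims :: "nat list \<Rightarrow> nat \<Rightarrow> (nat \<times> cmat) list \<Rightarrow> nat list" where
  "chain_dims ds k [] = ds"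
| "chain_dims ds k (x#xs) = chain_dims (ds[k := fst x]) (Suc k) xs"

fun chain_op :: "nat list \<Rightarrow> nat \<Rightarrow> (nat \<times> cmat) list \<Rightarrow> cvec \<Rightarrow> cvec" where
  "chain_op ds k [] = id"
| "chain_op ds k (x#xs) = chain_op (ds[k := fst x]) (Suc k) xs \<circ> apply_local ds k (snd x)"

lemma upt_add_Suc: "[k..<k + Suc n] = k # [Suc k..<Suc k + n]"
  by (simp add: upt_rec)

lemma leaves_chain:
  "leaves ds (chain B k n) = map (\<lambda>bl. (chain_dims ds k bl, chain_op ds k bl)) (product_lists (map B [k..<k+n]))"
proof (induction n arbitrary: k ds)
  case 0 then show ?case by simp
next
  case (Suc n)
  show ?case
    by (simp only: upt_add_Suc list.map product_lists.simps chain.simps leaves.simps map_map o_def prod.sel Suc.IH)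
       (simp add: map_concat o_def)
qed

definition complete_instrument :: "nat \<Rightarrow> (nat \<times> cmat) list \<Rightarrow> bool" where
  "complete_instrument dk brs \<longleftrightarrow> (\<forall>i<dk. \<forall>j<dk. (\<Sum>br\<leftarrow>brs. \<Sum>r<fst br. cnj (snd br r i) * snd br r j) = (if i = j then 1 else 0))"

lemma wf_locc_chain:
  "k + n \<le> length ds \<Longrightarrow> (\<forall>i<n. complete_instrument (ds!(k+i)) (B (k+i))) \<Longrightarrow> wf_locc ds (chain B k n)"
proof (induction n arbitrary: k ds)
  case 0 then show ?case by (simp add: wf_locc.wf_Leaf)
next
  case (Suc n)
  show ?case
  proof (simp, rule wf_locc.wf_Node)
    show "k < length ds" using Suc.prems by simp
    show "\<forall>br\<in>set (map (\<lambda>x. (fst x, snd x, chain B (Suc k) n)) (B k)). wf_locc (ds[k := fst br]) (snd (snd br))"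
    proof
      fix br assume "br \<in> set (map (\<lambda>x. (fst x, snd x, chain B (Suc k) n)) (B k))"
      then have e: "snd (snd br) = chain B (Suc k) n" by auto
      have "\<forall>i<n. complete_instrument (ds[k := fst br] ! (Suc k + i)) (B (Suc k + i))"
      proof (intro allI impI)
        fix i assume "i < n"
        then have "complete_instrument (ds!(k + Suc i)) (B (k + Suc i))" using Suc.prems(2) by blast
        then show "complete_instrument (ds[k := fst br] ! (Suc k + i)) (B (Suc k + i))" by simp
      qed
      then show "wf_locc (ds[k := fst br]) (snd (snd br))" unfolding e
        by (intro Suc.IH) (use Suc.prems in auto)
    qed
    show "\<forall>i<ds ! k. \<forall>j<ds ! k.
       (\<Sum>br\<leftarrow>map (\<lambda>x. (fst x, snd x, chain B (Suc k) n)) (B k). \<Sum>r<fst br. cnj (fst (snd br) r i) * fst (snd br) r j) =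
       (if i = j then 1 else 0)"
      using Suc.prems(2)[rule_format, of 0] by (simp add: complete_instrument_def o_def)
  qed
qed

lemma length_chain_dims[simp]: "length (chain_dims ds k bl) = length ds"
  by (induction bl arbitrary: ds k) auto

lemma chain_dims_eq: "k + length bl \<le> length ds \<Longrightarrow> chain_dims ds k bl = take k ds @ map fst bl @ drop (k + length bl) ds"
proof (induction bl arbitrary: ds k)
  case Nil then show ?case by simp
next
  case (Cons x xs)
  have k: "k < length ds" using Cons.prems by simp
  have "chain_dims ds k (x#xs) = take (Suc k) (ds[k := fst x]) @ map fst xs @ drop (Suc k + length xs) (ds[k := fst x])"
    using Cons by simp
  also have "take (Suc k) (ds[k := fst x]) = take k ds @ [fst x]"
    using k by (simp add: take_Suc_conv_app_nth take_update_cancel)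
  finally show ?case by simp
qed

lemma chain_op_eq:
  "k + length bl \<le> length ds \<Longrightarrow> js \<in> idx (chain_dims ds k bl) \<Longrightarrow>
   chain_op ds k bl v js = (\<Sum>as\<in>idx (take (length bl) (drop k ds)).
      (\<Prod>i<length bl. snd (bl!i) (js!(k+i)) (as!i)) * v (take k js @ as @ drop (k + length bl) js))"
proof (induction bl arbitrary: ds k js v)
  case Nil then show ?case by simp
next
  case (Cons x xs)
  have k: "k < length ds" using Cons.prems by simp
  have ljs: "length js = length ds" using Cons.prems(2) idx_length by fastforce
  define n where "n = length xs"
  define P' where "P' as' = (\<Prod>i<n. snd (xs!i) (js!(Suc k+i)) (as'!i))" for as'
  have IH: "chain_op (ds[k := fst x]) (Suc k) xs u js = (\<Sum>as'\<in>idx (take n (drop (Suc k) ds)).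
      P' as' * u (take (Suc k) js @ as' @ drop (Suc k + n) js))" for u
    using Cons.IH[where ds="ds[k := fst x]" and k="Suc k" and js=js and v=u] Cons.prems by (simp add: P'_def n_def)
  have y1: "(take (Suc k) js @ as' @ drop (Suc (k + n)) js) ! k = js!k" for as'
    using k ljs by (simp add: nth_append)
  have y2: "(take (Suc k) js @ as' @ drop (Suc (k + n)) js)[k := j] = take k js @ j # as' @ drop (Suc (k + n)) js" for as' j
    using k ljs by (simp add: take_Suc_conv_app_nth list_update_append)
  have td: "take (Suc n) (drop k ds) = ds!k # take n (drop (Suc k) ds)"
    using k by (simp add: Cons_nth_drop_Suc[symmetric])
  have "chain_op ds k (x#xs) v js = (\<Sum>as'\<in>idx (take n (drop (Suc k) ds)).
      P' as' * (\<Sum>j<ds!k. snd x (js!k) j * v (take k js @ j # as' @ drop (Suc k + n) js)))"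
    by (simp add: IH apply_local_def y1 y2)
  also have "\<dots> = (\<Sum>j<ds!k. \<Sum>as'\<in>idx (take n (drop (Suc k) ds)).
      (snd x (js!k) j * P' as') * v (take k js @ j # as' @ drop (Suc k + n) js))"
    by (subst sum.swap) (simp add: sum_distrib_left mult_ac)
  also have "\<dots> = (\<Sum>as\<in>idx (take (Suc n) (drop k ds)).
      (\<Prod>i<Suc n. snd ((x#xs)!i) (js!(k+i)) (as!i)) * v (take k js @ as @ drop (k + Suc n) js))"
    unfolding td sum_idx_Cons by (simp del: prod.lessThan_Suc add: prod.lessThan_Suc_shift P'_def mult_ac)
  finally show ?case by (simp add: n_def)
qed

section \<open>Inner products and dual bases\<close>

lemma cinner_scale_add: "cinner d f (\<lambda>x. a * g x + h x) = a * cinner d f g + cinner d f h"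
  by (simp add: cinner_def sum.distrib sum_distrib_left algebra_simps)

lemma cinner_scale: "cinner d f (\<lambda>x. a * g x) = a * cinner d f g"
  by (simp add: cinner_def sum_distrib_left algebra_simps)

lemma cinner_diff: "cinner d f (\<lambda>x. g x - h x) = cinner d f g - cinner d f h"
  by (simp add: cinner_def sum_subtractf algebra_simps)

lemma cinner_sym: "cinner d g f = cnj (cinner d f g)"
  by (simp add: cinner_def mult.commute)

lemma cinner_cong: "(\<And>x. x \<in> idx d \<Longrightarrow> f x = f' x) \<Longrightarrow> (\<And>x. x \<in> idx d \<Longrightarrow> g x = g' x) \<Longrightarrow> cinner d f g = cinner d f' g'"
  by (simp add: cinner_def)

lemma cinner_self: "cinner d f f = of_real (\<Sum>x\<in>idx d. (cmod (f x))\<^sup>2)"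
proof -
  have "cnj z * z = of_real ((cmod z)\<^sup>2)" for z
    using complex_norm_square[of z] by (simp add: mult.commute)
  then show ?thesis by (simp add: cinner_def)
qed

lemma cinner_self_zero: "cinner d f f = 0 \<Longrightarrow> x \<in> idx d \<Longrightarrow> f x = 0"
proof -
  assume a: "cinner d f f = 0" "x \<in> idx d"
  have "(\<Sum>x\<in>idx d. (cmod (f x))\<^sup>2) = 0" using a cinner_self[of d f] by (metis of_real_eq_0_iff)
  then have "(cmod (f x))\<^sup>2 = 0" using a by (simp add: sum_nonneg_eq_0_iff)
  then show ?thesis by simp
qed

interpretation fv: vector_space "\<lambda>(c::complex) (f::cvec) x. c * f x"
  by unfold_locales (auto simp: fun_eq_iff algebra_simps)

lemma sum_fun_apply: "(sum g A) x = (\<Sum>a\<in>A. g a x)"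
  for g :: "'a \<Rightarrow> cvec"
  by (induction A rule: infinite_finite_induct) auto

definition restrict_idx :: "nat list \<Rightarrow> cvec \<Rightarrow> cvec" where
  "restrict_idx ds f = (\<lambda>x. if x \<in> idx ds then f x else 0)"

lemma cinner_restrict_idx [simp]:
  "cinner ds (restrict_idx ds f) g = cinner ds f g" "cinner ds f (restrict_idx ds g) = cinner ds f g"
  by (auto simp: restrict_idx_def intro: cinner_cong)

lemma card_le_card_idx_if_independent:
  assumes "fv.independent A" "A \<subseteq> range (restrict_idx ds)"
  shows "card A \<le> card (idx ds)"
proof -
  define T where "T = (\<lambda>y x. if x = y then 1 else 0 :: complex) ` idx ds"
  have "restrict_idx ds f \<in> fv.span T" for f
  proof -
    have "restrict_idx ds f = (\<Sum>y\<in>idx ds. (\<lambda>x. f y * (if x = y then 1 else 0)))"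
      by (rule ext) (simp add: sum_fun_apply restrict_idx_def if_distrib sum.delta cong: if_cong)
    also have "\<dots> \<in> fv.span T"
      by (intro fv.span_sum fv.span_scale fv.span_base) (auto simp: T_def)
    finally show ?thesis .
  qed
  then have "A \<subseteq> fv.span T" using assms(2) by auto
  then have "card A \<le> card T"
    using fv.independent_span_bound[OF _ assms(1)] by (simp add: T_def)
  also have "\<dots> \<le> card (idx ds)" unfolding T_def by (rule card_image_le) simp
  finally show ?thesis .
qed

lemma cinner_eq_0_on_span:
  assumes "v \<in> fv.span S" and "\<And>s. s \<in> S \<Longrightarrow> cinner ds a s = 0"
  shows "cinner ds a v = 0"
  using assms(1)
proof (induction rule: fv.span_induct_alt)
  case base then show ?case by (simp add: cinner_def)
next
  case (step c s v)
  have "cinner ds a (\<lambda>x. c * s x + v x) = c * cinner ds a s + cinner ds a v"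
    by (rule cinner_scale_add)
  then show ?case using step assms(2) by (simp add: plus_fun_def)
qed

lemma independent_restrict_basis:
  fixes \<psi> :: "nat \<Rightarrow> cvec"
  assumes basis: "\<forall>c :: nat \<Rightarrow> complex.
                  (\<forall>is\<in>idx d. (\<Sum>i=1..D. c i * \<psi> i is) = 0) \<longrightarrow> (\<forall>i\<in>{1..D}. c i = 0)"
  shows "inj_on (\<lambda>j. restrict_idx d (\<psi> j)) {1..D}"
    and "fv.independent ((\<lambda>j. restrict_idx d (\<psi> j)) ` {1..D})"
proof -
  let ?R = "\<lambda>j. restrict_idx d (\<psi> j)"
  show inj: "inj_on ?R {1..D}"
  proof (rule inj_onI, rule ccontr)
    fix i j assume ij: "i \<in> {1..D}" "j \<in> {1..D}" "?R i = ?R j" "i \<noteq> j"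
    define c where "c k = (if k = i then 1 else if k = j then -1 else (0::complex))" for k
    have "(\<Sum>k=1..D. c k * \<psi> k x) = 0" if x: "x \<in> idx d" for x
    proof -
      have "(\<Sum>k=1..D. c k * \<psi> k x) = (\<Sum>k\<in>{1..D}. (if k = i then \<psi> i x else 0) - (if k = j then \<psi> j x else 0))"
        by (intro sum.cong) (use ij in \<open>auto simp: c_def\<close>)
      also have "\<dots> = \<psi> i x - \<psi> j x" using ij by (simp add: sum_subtractf sum.delta)
      also have "\<dots> = 0" using fun_cong[OF ij(3), of x] x by (simp add: restrict_idx_def)
      finally show ?thesis .
    qed
    then have "c i = 0" using basis ij by blast
    then show False by (simp add: c_def)
  qed
  show "fv.independent (?R ` {1..D})"
  proof (rule fv.independent_if_scalars_zero)
    fix f v assume sum0: "(\<Sum>v\<in>?R ` {1..D}. (\<lambda>x. f v * v x)) = 0" and v: "v \<in> ?R ` {1..D}"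
    have "(\<Sum>j=1..D. f (?R j) * \<psi> j x) = 0" if x: "x \<in> idx d" for x
    proof -
      have "0 = (\<Sum>v\<in>?R ` {1..D}. (\<lambda>x. f v * v x)) x"
        by (simp only: sum0 zero_fun_apply)
      also have "\<dots> = (\<Sum>j=1..D. f (?R j) * ?R j x)"
        unfolding sum_fun_apply by (subst sum.reindex[OF inj]) simp
      also have "\<dots> = (\<Sum>j=1..D. f (?R j) * \<psi> j x)"
        using x by (simp add: restrict_idx_def)
      finally show ?thesis by (rule sym)
    qed
    then have "\<forall>j\<in>{1..D}. f (?R j) = 0" using basis[rule_format, of "\<lambda>j. f (?R j)"] by blast
    then show "f v = 0" using v by blast
  qed simp
qed

text \<open>A vector orthogonal to all D vectors of a basis would extend it to D + 1 independent
  vectors in a space of dimension D.\<close>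
lemma orth_basis_imp_zero:
  fixes d :: "nat list" and D :: nat and \<psi> :: "nat \<Rightarrow> cvec" and u :: cvec
  assumes D_def: "D = prod_list d"
    and basis: "\<forall>c :: nat \<Rightarrow> complex.
                  (\<forall>is\<in>idx d. (\<Sum>i=1..D. c i * \<psi> i is) = 0) \<longrightarrow> (\<forall>i\<in>{1..D}. c i = 0)"
    and orth: "\<forall>j\<in>{1..D}. cinner d (\<psi> j) u = 0"
  shows "\<forall>x\<in>idx d. u x = 0"
proof (rule ccontr)
  assume "\<not> (\<forall>x\<in>idx d. u x = 0)"
  then have uu: "cinner d u u \<noteq> 0" using cinner_self_zero by blast
  define a where "a = restrict_idx d u"
  define S where "S = (\<lambda>j. restrict_idx d (\<psi> j)) ` {1..D}"
  have "cinner d a s = 0" if "s \<in> S" for s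
    using that orth cinner_sym[of d u] by (auto simp: a_def S_def)
  then have "a \<notin> fv.span S" using cinner_eq_0_on_span[of a S d a] uu by (auto simp: a_def)
  then have indep: "fv.independent (insert a S)" and "a \<notin> S"
    using fv.independent_insertI independent_restrict_basis(2)[OF basis] fv.span_base
    by (auto simp: S_def)
  have "card (insert a S) \<le> card (idx d)"
    by (rule card_le_card_idx_if_independent[OF indep]) (auto simp: a_def S_def)
  moreover have "card (insert a S) = Suc D"
    using \<open>a \<notin> S\<close> independent_restrict_basis(1)[OF basis] by (simp add: S_def card_image)
  ultimately show False by (simp add: card_idx D_def)
qed

locale dual_basis =
  fixes d :: "nat list" and D :: nat and \<psi> \<psi>t :: "nat \<Rightarrow> cvec"
  assumes D_def: "D = prod_list d"
    and basis: "\<forall>c :: nat \<Rightarrow> complex.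
                  (\<forall>is\<in>idx d. (\<Sum>i=1..D. c i * \<psi> i is) = 0) \<longrightarrow> (\<forall>i\<in>{1..D}. c i = 0)"
    and psi_unit: "\<forall>i\<in>{1..D}. cinner d (\<psi> i) (\<psi> i) = 1"
    and dual: "\<forall>i\<in>{1..D}. cinner d (\<psi>t i) (\<psi>t i) = 1 \<and>
                 (\<forall>j\<in>{1..D}. j \<noteq> i \<longrightarrow> cinner d (\<psi> j) (\<psi>t i) = 0)"
begin

lemma orth_all_psi_imp_zero: "(\<And>j. j \<in> {1..D} \<Longrightarrow> cinner d (\<psi> j) u = 0) \<Longrightarrow> x \<in> idx d \<Longrightarrow> u x = 0"
  using orth_basis_imp_zero[OF D_def basis] by blast

lemma cinner_psi_dual_nonzero: "i \<in> {1..D} \<Longrightarrow> cinner d (\<psi> i) (\<psi>t i) \<noteq> 0"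
proof
  assume i: "i \<in> {1..D}" and z: "cinner d (\<psi> i) (\<psi>t i) = 0"
  have "\<And>x. x \<in> idx d \<Longrightarrow> \<psi>t i x = 0"
    by (rule orth_all_psi_imp_zero) (use dual i z in \<open>metis\<close>)
  then have "cinner d (\<psi>t i) (\<psi>t i) = 0" by (simp add: cinner_def)
  then show False using dual i by simp
qed

lemma orth_others_imp_dual_multiple:
  assumes i: "i \<in> {1..D}" and orth: "\<And>j. j \<in> {1..D} \<Longrightarrow> j \<noteq> i \<Longrightarrow> cinner d (\<psi> j) v = 0"
    and x: "x \<in> idx d"
  shows "v x = cinner d (\<psi>t i) v * \<psi>t i x"
proof -
  define al where "al = cinner d (\<psi>t i) v"
  define u where "u y = v y - al * \<psi>t i y" for y
  define c where "c = cinner d (\<psi> i) u / cinner d (\<psi> i) (\<psi>t i)"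
  define w where "w y = u y - c * \<psi>t i y" for y
  have nz: "cinner d (\<psi> i) (\<psi>t i) \<noteq> 0" by (rule cinner_psi_dual_nonzero[OF i])
  have uj: "cinner d (\<psi> j) u = 0" if "j \<in> {1..D}" "j \<noteq> i" for j
    using orth[OF that] dual i that unfolding u_def by (simp add: cinner_diff cinner_scale)
  have "cinner d (\<psi> j) w = 0" if "j \<in> {1..D}" for j
  proof (cases "j = i")
    case True then show ?thesis using nz unfolding w_def by (simp only: cinner_diff cinner_scale) (simp add: c_def)
  next
    case False then show ?thesis using uj[OF that False] dual i that unfolding w_def
      by (simp add: cinner_diff cinner_scale)
  qed
  then have w0: "\<And>y. y \<in> idx d \<Longrightarrow> w y = 0" by (rule orth_all_psi_imp_zero) blast
  have "cinner d (\<psi>t i) u = 0" using dual i unfolding u_def al_def by (simp add: cinner_diff cinner_scale)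
  moreover have "cinner d (\<psi>t i) u = cinner d (\<psi>t i) (\<lambda>y. c * \<psi>t i y)"
    by (rule cinner_cong) (use w0 in \<open>auto simp: w_def\<close>)
  ultimately have "c = 0" using dual i by (simp add: cinner_scale)
  then have "u x = 0" using w0[OF x] by (simp add: w_def)
  then show ?thesis by (simp add: u_def al_def)
qed

lemma cmod_cinner_psi_dual_le1:
  assumes i: "i \<in> {1..D}"
  shows "(cmod (cinner d (\<psi> i) (\<psi>t i)))\<^sup>2 \<le> 1"
proof -
  define c where "c = cinner d (\<psi>t i) (\<psi> i)"
  define r where "r y = \<psi> i y - c * \<psi>t i y" for y
  have "cinner d r r = cinner d r (\<lambda>y. \<psi> i y - c * \<psi>t i y)"
    by (rule arg_cong[where f="cinner d r"]) (simp add: fun_eq_iff r_def)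
  also have "\<dots> = cinner d r (\<psi> i) - c * cinner d r (\<psi>t i)"
    by (simp only: cinner_diff cinner_scale)
  also have "cinner d r (\<psi>t i) = 0"
  proof -
    have "cinner d (\<psi>t i) r = cinner d (\<psi>t i) (\<lambda>y. \<psi> i y - c * \<psi>t i y)"
      by (rule arg_cong[where f="cinner d (\<psi>t i)"]) (simp add: fun_eq_iff r_def)
    also have "\<dots> = 0" using dual i by (simp only: cinner_diff cinner_scale) (simp add: c_def)
    finally show ?thesis by (simp add: cinner_sym[of d r])
  qed
  also have "cinner d r (\<psi> i) = 1 - cnj c * c"
  proof -
    have "cinner d r (\<psi> i) = cnj (cinner d (\<psi> i) r)" by (rule cinner_sym)
    also have "cinner d (\<psi> i) r = 1 - c * cinner d (\<psi> i) (\<psi>t i)"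
    proof -
      have "cinner d (\<psi> i) r = cinner d (\<psi> i) (\<lambda>y. \<psi> i y - c * \<psi>t i y)"
        by (rule arg_cong[where f="cinner d (\<psi> i)"]) (simp add: fun_eq_iff r_def)
      then show ?thesis using psi_unit i by (simp only: cinner_diff cinner_scale)
    qed
    also have "cinner d (\<psi> i) (\<psi>t i) = cnj c" by (simp only: c_def cinner_sym[of d "\<psi> i" "\<psi>t i"])
    finally show ?thesis by simp
  qed
  finally have "cinner d r r = 1 - cnj c * c" by simp
  moreover have "Re (cinner d r r) \<ge> 0" by (simp add: cinner_self sum_nonneg)
  ultimately have "Re (cnj c * c) \<le> 1" by simp
  moreover have "Re (cnj c * c) = (cmod c)\<^sup>2" by (simp add: cmod_power2) (simp add: power2_eq_square)
  moreover have "cmod (cinner d (\<psi> i) (\<psi>t i)) = cmod c" by (simp only: c_def cinner_sym[of d "\<psi> i" "\<psi>t i"] complex_mod_cnj)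
  ultimately show ?thesis by simp
qed

end

section \<open>The forward protocol\<close>

lemma sum_list_concat: "sum_list (concat xss) = sum_list (map sum_list xss)"
  by (induction xss) auto

lemma sum_list_product_lists_upt:
  "sum_list (map f (product_lists (map (\<lambda>x. [0..<x]) ds))) = (\<Sum>e\<in>idx ds. f e)"
proof (induction ds arbitrary: f)
  case Nil then show ?case by simp
next
  case (Cons x ds)
  have "sum_list (map f (product_lists (map (\<lambda>x. [0..<x]) (x#ds))))
      = sum_list (map (\<lambda>j. sum_list (map (\<lambda>as. f (j#as)) (product_lists (map (\<lambda>x. [0..<x]) ds)))) [0..<x])"
    by (simp add: map_concat sum_list_concat o_def)
  also have "\<dots> = (\<Sum>j<x. \<Sum>as\<in>idx ds. f (j#as))"
    by (simp add: Cons.IH interv_sum_list_conv_sum_set_nat atLeast0LessThan)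
  also have "\<dots> = (\<Sum>e\<in>idx (x#ds). f e)" by (simp add: sum_idx_Cons)
  finally show ?case .
qed

lemma sum_labelled_sum_list:
  "(\<Sum>n | n < length (map fst LL) \<and> snd (LL!n) = i. h (map fst LL ! n))
   = sum_list (map (\<lambda>(x,lb). if lb = i then h x else 0) LL)"
proof -
  have "(\<Sum>n | n < length (map fst LL) \<and> snd (LL!n) = i. h (map fst LL ! n))
      = (\<Sum>n\<in>{0..<length LL}. if snd (LL!n) = i then h (fst (LL!n)) else 0)"
    by (subst sum.inter_filter[symmetric]) (auto intro!: sum.cong)
  also have "\<dots> = sum_list (map (\<lambda>n. if snd (LL!n) = i then h (fst (LL!n)) else 0) [0..<length LL])"
    by (simp add: interv_sum_list_conv_sum_set_nat)
  also have "\<dots> = sum_list (map (\<lambda>(x,lb). if lb = i then h x else 0) (map (\<lambda>n. LL!n) [0..<length LL]))"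
    by (simp add: case_prod_beta o_def)
  also have "\<dots> = sum_list (map (\<lambda>(x,lb). if lb = i then h x else 0) LL)"
    by (simp only: map_nth)
  finally show ?thesis .
qed

lemma product_lists_map:
  "product_lists (map (\<lambda>k. map (f k) (xs k)) ks) = map (\<lambda>es. map (\<lambda>(k,e). f k e) (zip ks es)) (product_lists (map xs ks))"
  by (induction ks) (auto simp: map_concat o_def)

lemma chain_dims_full: "length bl = length ds \<Longrightarrow> chain_dims ds 0 bl = map fst bl"
  by (simp add: chain_dims_eq)

lemma chain_op_full:
  assumes "length bl = length ds" "js \<in> idx (chain_dims ds 0 bl)"
  shows "chain_op ds 0 bl v js = (\<Sum>as\<in>idx ds. (\<Prod>i<length ds. snd (bl!i) (js!i) (as!i)) * v as)"
proof -
  have ljs: "length js = length ds" using assms idx_length by fastforce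
  show ?thesis using chain_op_eq[of 0 bl ds js v] assms ljs by simp
qed

lemma prod_if_all: "(\<Prod>i<(n::nat). if P i then f i else (0::'a::comm_semiring_1)) = (if \<forall>i<n. P i then \<Prod>i<n. f i else 0)"
  by (induction n) (auto simp: less_Suc_eq)

text \<open>Party k maps a to (1 / sqrt d_k) \<Sum>x. (a, x, x), with local index (a d_k + x) d_k + x:
  it adjoins its share of the maximally entangled vector on two copies of H. The instrument
  readout_kraus measures the first factor of C^m \<otimes> C^(d_k) in the computational basis.\<close>
definition entangle_kraus :: "nat list \<Rightarrow> nat \<Rightarrow> cmat" where
  "entangle_kraus d k = (\<lambda>y a. if y div (d!k) div (d!k) = a \<and> (y div d!k) mod d!k = y mod d!k
                     then complex_of_real (1 / sqrt (real (d!k))) else 0)"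

definition readout_kraus :: "nat list \<Rightarrow> nat \<Rightarrow> nat \<Rightarrow> cmat" where
  "readout_kraus d k e = (\<lambda>b y. if y = e * d!k + b then 1 else 0)"

definition entangle_chain :: "nat list \<Rightarrow> nat list \<Rightarrow> locc" where
  "entangle_chain d' d = chain (\<lambda>k. [(d'!k * d!k * d!k, entangle_kraus d k)]) 0 (length d)"

definition readout :: "nat list \<Rightarrow> nat list \<Rightarrow> locc" where
  "readout d ds = chain (\<lambda>k. map (\<lambda>e. (d!k, readout_kraus d k e)) [0..<ds!k div d!k]) 0 (length d)"

definition forward_protocol :: "nat list \<Rightarrow> nat list \<Rightarrow> locc \<Rightarrow> locc" where
  "forward_protocol d' d t = graft d' (entangle_chain d' d) (\<lambda>ds. graft ds (lift_locc d (conj_locc t)) (readout d))"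

lemma div_mod_nested_index:
  assumes "(n::nat) > 0" "x < n" "s < n"
  shows "((a*n+x)*n+s) div n = a*n+x" "((a*n+x)*n+s) mod n = s" "(a*n+x) div n = a" "(a*n+x) mod n = x"
  using assms by simp_all

lemma entangle_kraus_eq:
  assumes "d!k > 0" "x < d!k" "s < d!k"
  shows "entangle_kraus d k ((a*d!k+x)*d!k+s) i = (if a = i \<and> x = s then complex_of_real (1 / sqrt (real (d!k))) else 0)"
  using div_mod_nested_index[OF assms] by (auto simp: entangle_kraus_def)

lemma complete_entangle_kraus:
  assumes dk: "d!k > 0"
  shows "complete_instrument dp [(dp * d!k * d!k, entangle_kraus d k)]"
  unfolding complete_instrument_def
proof (intro allI impI)
  fix i j assume ij: "i < dp" "j < dp"
  define c where "c = complex_of_real (1 / sqrt (real (d!k)))"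
  have cc: "cnj c * c = 1 / of_nat (d!k)"
  proof -
    have "(1 / sqrt (real (d!k))) * (1 / sqrt (real (d!k))) = 1 / real (d!k)"
      using dk by (simp add: divide_simps)
    then have "complex_of_real (1 / sqrt (real (d!k))) * complex_of_real (1 / sqrt (real (d!k))) = 1 / of_nat (d!k)"
      by (metis of_real_mult of_real_divide of_real_1 of_real_of_nat_eq)
    then show ?thesis by (simp add: c_def)
  qed
  let ?n = "d!k"
  have "(\<Sum>r<dp * ?n * ?n. cnj (entangle_kraus d k r i) * entangle_kraus d k r j)
      = (\<Sum>q<dp * ?n. \<Sum>s<?n. cnj (entangle_kraus d k (q*?n+s) i) * entangle_kraus d k (q*?n+s) j)"
    by (rule sum_lessThan_mult_split[OF dk])
  also have "\<dots> = (\<Sum>a<dp. \<Sum>x<?n. \<Sum>s<?n. cnj (entangle_kraus d k ((a*?n+x)*?n+s) i) * entangle_kraus d k ((a*?n+x)*?n+s) j)"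
    by (rule sum_lessThan_mult_split[OF dk])
  also have "\<dots> = (\<Sum>a<dp. \<Sum>x<?n. \<Sum>s<?n. if a = i \<and> a = j \<and> x = s then cnj c * c else 0)"
    using dk by (intro sum.cong refl) (auto simp: entangle_kraus_eq c_def)
  also have "\<dots> = (if i = j then (\<Sum>x<?n. cnj c * c) else 0)"
  proof -
    have "(\<Sum>s<?n. if a = i \<and> a = j \<and> x = s then cnj c * c else 0) = (if a = i \<and> a = j \<and> x < ?n then cnj c * c else 0)" for a x
    proof (cases "a = i \<and> a = j")
      case True then show ?thesis by (simp add: sum.delta)
    next
      case False then show ?thesis by (auto intro!: sum.neutral)
    qed
    then have "(\<Sum>a<dp. \<Sum>x<?n. \<Sum>s<?n. if a = i \<and> a = j \<and> x = s then cnj c * c else 0)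
        = (\<Sum>a<dp. \<Sum>x<?n. if a = i \<and> a = j \<and> x < ?n then cnj c * c else 0)" by simp
    also have "\<dots> = (\<Sum>a<dp. if a = i \<and> a = j then (\<Sum>x<?n. cnj c * c) else 0)"
      by (intro sum.cong refl) auto
    also have "\<dots> = (if i = j then (\<Sum>x<?n. cnj c * c) else 0)"
      using ij by (cases "i = j") (auto simp: sum.delta intro!: sum.neutral)
    finally show ?thesis .
  qed
  also have "\<dots> = (if i = j then 1 else 0)" using cc dk by simp
  finally show "(\<Sum>br\<leftarrow>[(dp * d!k * d!k, entangle_kraus d k)]. \<Sum>r<fst br. cnj (snd br r i) * snd br r j) = (if i = j then 1 else 0)"
    by simp
qed

lemma complete_readout_kraus:
  assumes dk: "d!k > 0"
  shows "complete_instrument (mk * d!k) (map (\<lambda>e. (d!k, readout_kraus d k e)) [0..<mk])"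
  unfolding complete_instrument_def
proof (intro allI impI)
  fix i j assume ij: "i < mk * d!k" "j < mk * d!k"
  let ?n = "d!k"
  have "(\<Sum>br\<leftarrow>map (\<lambda>e. (?n, readout_kraus d k e)) [0..<mk]. \<Sum>r<fst br. cnj (snd br r i) * snd br r j)
      = (\<Sum>e<mk. \<Sum>b<?n. cnj (readout_kraus d k e b i) * readout_kraus d k e b j)"
    by (simp add: interv_sum_list_conv_sum_set_nat atLeast0LessThan o_def)
  also have "\<dots> = (\<Sum>e<mk. \<Sum>b<?n. (\<lambda>r. if i = r \<and> j = r then 1 else 0) (e*?n+b))"
    by (intro sum.cong refl) (auto simp: readout_kraus_def)
  also have "\<dots> = (\<Sum>r<mk*?n. if i = r \<and> j = r then 1 else 0)"
    by (rule sum_lessThan_mult_split[OF dk, symmetric])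
  also have "\<dots> = (if i = j then 1 else 0)"
    using ij by (cases "i = j") (simp_all add: sum.delta sum.neutral)
  finally show "(\<Sum>br\<leftarrow>map (\<lambda>e. (?n, readout_kraus d k e)) [0..<mk]. \<Sum>r<fst br. cnj (snd br r i) * snd br r j) = (if i = j then 1 else 0)" .
qed

lemma product_lists_singletons: "product_lists (map (\<lambda>k. [f k]) ks) = [map f ks]"
  by (induction ks) auto

definition idx_hi :: "nat list \<Rightarrow> nat list \<Rightarrow> nat list" where
  "idx_hi d c = map2 (\<lambda>j b. j div b) c d"
definition idx_lo :: "nat list \<Rightarrow> nat list \<Rightarrow> nat list" where
  "idx_lo d c = map2 (\<lambda>j b. j mod b) c d"

lemma tensorv_eq: "tensorv d u w c = u (idx_hi d c) * w (idx_lo d c)"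
  by (simp add: tensorv_def idx_hi_def idx_lo_def)

lemma real_prod_list: "real (prod_list d) = (\<Prod>i<length d. real (d!i))"
  by (induction d) (simp_all del: prod.lessThan_Suc add: prod.lessThan_Suc_shift)

locale pos_dims =
  fixes d d' :: "nat list"
  assumes len: "length d' = length d"
    and dpos: "\<forall>k<length d. d!k > 0"
begin

abbreviation "N \<equiv> length d"
abbreviation "m \<equiv> map2 (*) d' d"
abbreviation "M2 \<equiv> map2 (*) m d"

definition entangle_kraus_list :: "(nat \<times> cmat) list" where
  "entangle_kraus_list = map (\<lambda>k. (d'!k * d!k * d!k, entangle_kraus d k)) [0..<N]"
definition entangle_op :: "cvec \<Rightarrow> cvec" where
  "entangle_op = chain_op d' 0 entangle_kraus_list"
definition kappa :: real where "kappa = (\<Prod>i<N. 1 / sqrt (real (d!i)))"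

lemma length_m[simp]: "length m = N" using len by simp

lemma leaves_entangle_chain: "leaves d' (entangle_chain d' d) = [(M2, entangle_op)]"
proof -
  have "product_lists (map (\<lambda>k. [(d'!k * d!k * d!k, entangle_kraus d k)]) [0..<0 + N]) = [entangle_kraus_list]"
    by (simp add: product_lists_singletons entangle_kraus_list_def)
  moreover have "chain_dims d' 0 entangle_kraus_list = M2"
    using len by (simp add: chain_dims_full entangle_kraus_list_def) (intro nth_equalityI, auto)
  ultimately show ?thesis unfolding entangle_chain_def leaves_chain by (simp add: entangle_op_def)
qed

lemma wf_locc_entangle_chain: "wf_locc d' (entangle_chain d' d)"
  unfolding entangle_chain_def using len dpos by (intro wf_locc_chain) (auto intro: complete_entangle_kraus)

lemma kappa_sq: "kappa\<^sup>2 = 1 / real (prod_list d)"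
proof -
  have "kappa\<^sup>2 = (\<Prod>i<N. (1 / sqrt (real (d!i)))\<^sup>2)" by (simp add: kappa_def prod_power_distrib)
  also have "\<dots> = (\<Prod>i<N. 1 / real (d!i))" by (intro prod.cong refl) (simp add: power_divide)
  also have "\<dots> = 1 / (\<Prod>i<N. real (d!i))" by (simp add: prod_dividef)
  also have "(\<Prod>i<N. real (d!i)) = real (prod_list d)"
    by (rule real_prod_list[symmetric])
  finally show ?thesis .
qed

lemma kappa_nonneg: "kappa \<ge> 0"
  by (simp add: kappa_def prod_nonneg)

lemma idx_hi_in_idx: "c \<in> idx m \<Longrightarrow> idx_hi d c \<in> idx d'"
  using dpos len by (auto simp: idx_def idx_hi_def div_less_iff_less_mult)

lemma prod_entangle_kraus:
  assumes c: "c \<in> idx m" and b: "b \<in> idx d" and as: "as \<in> idx d'"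
  shows "(\<Prod>i<N. entangle_kraus d i (idx_join d c b ! i) (as ! i))
           = (if as = idx_hi d c \<and> idx_lo d c = b then complex_of_real kappa else 0)"
proof -
  have lengths: "length c = N" "length b = N" "length as = N"
    using c b as len idx_length length_m by metis+
  have factor: "entangle_kraus d i (idx_join d c b ! i) a
      = (if c!i div d!i = a \<and> c!i mod d!i = b!i then complex_of_real (1 / sqrt (real (d!i))) else 0)"
    if "i < N" for i a
  proof -
    have "idx_join d c b ! i = ((c!i div d!i) * d!i + c!i mod d!i) * d!i + b!i"
      using that by (simp add: div_mult_mod_eq)
    moreover have "b!i < d!i" using b that idx_nth by fastforce
    ultimately show ?thesis using dpos that by (simp only:) (intro entangle_kraus_eq, auto)
  qed
  have "(\<Prod>i<N. entangle_kraus d i (idx_join d c b ! i) (as ! i))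
      = (\<Prod>i<N. if c!i div d!i = as!i \<and> c!i mod d!i = b!i then complex_of_real (1 / sqrt (real (d!i))) else 0)"
    by (intro prod.cong refl) (rule factor, simp)
  also have "\<dots> = (if \<forall>i<N. c!i div d!i = as!i \<and> c!i mod d!i = b!i
                   then (\<Prod>i<N. complex_of_real (1 / sqrt (real (d!i)))) else 0)"
    by (rule prod_if_all)
  also have "(\<forall>i<N. c!i div d!i = as!i \<and> c!i mod d!i = b!i) \<longleftrightarrow> as = idx_hi d c \<and> idx_lo d c = b"
    using lengths by (auto simp: idx_hi_def idx_lo_def list_eq_iff_nth_eq)
  finally show ?thesis by (simp add: kappa_def)
qed

lemma entangle_op_eq:
  assumes c: "c \<in> idx m" and b: "b \<in> idx d"
  shows "entangle_op v (idx_join d c b) = (if idx_lo d c = b then complex_of_real kappa * v (idx_hi d c) else 0)"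
proof -
  have "chain_dims d' 0 entangle_kraus_list = M2"
    using len by (simp add: chain_dims_full entangle_kraus_list_def) (intro nth_equalityI, auto)
  then have "idx_join d c b \<in> idx (chain_dims d' 0 entangle_kraus_list)"
    using idx_join_in_idx[OF c b] len by simp
  then have "entangle_op v (idx_join d c b)
      = (\<Sum>as\<in>idx d'. (\<Prod>i<N. entangle_kraus d i (idx_join d c b ! i) (as ! i)) * v as)"
    unfolding entangle_op_def using chain_op_full[of entangle_kraus_list d' "idx_join d c b" v] len
    by (simp add: entangle_kraus_list_def)
  also have "\<dots> = (\<Sum>as\<in>idx d'. if as = idx_hi d c then (if idx_lo d c = b then complex_of_real kappa * v as else 0) else 0)"
    using prod_entangle_kraus[OF c b] by (intro sum.cong) auto
  also have "\<dots> = (if idx_lo d c = b then complex_of_real kappa * v (idx_hi d c) else 0)"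
    using idx_hi_in_idx[OF c] by (simp add: sum.delta')
  finally show ?thesis .
qed

definition readout_kraus_list :: "nat list \<Rightarrow> (nat \<times> cmat) list" where
  "readout_kraus_list es = map (\<lambda>(k,e). (d!k, readout_kraus d k e)) (zip [0..<N] es)"

lemma readout_kraus_list_nth: "length es = N \<Longrightarrow> i < N \<Longrightarrow> readout_kraus_list es ! i = (d!i, readout_kraus d i (es!i))"
  by (simp add: readout_kraus_list_def)

lemma leaves_readout:
  assumes lm: "length m' = N"
  shows "leaves (map2 (*) m' d) (readout d (map2 (*) m' d)) =
     map (\<lambda>es. (d, chain_op (map2 (*) m' d) 0 (readout_kraus_list es))) (product_lists (map (\<lambda>x. [0..<x]) m'))"
proof -
  have e1: "map (\<lambda>k. [0..<map2 (*) m' d!k div d!k]) [0..<N] = map (\<lambda>x. [0..<x]) m'"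
    using lm dpos by (intro nth_equalityI) auto
  have e2: "chain_dims (map2 (*) m' d) 0 (readout_kraus_list es) = d" if "es \<in> set (product_lists (map (\<lambda>x. [0..<x]) m'))" for es
  proof -
    have "length es = N" using in_set_product_lists_length[OF that] lm by simp
    then show ?thesis using lm by (simp add: chain_dims_full readout_kraus_list_def) (intro nth_equalityI, auto)
  qed
  show ?thesis unfolding readout_def leaves_chain
    by (simp add: product_lists_map e1 readout_kraus_list_def[symmetric] cong: map_cong) (use e2 in \<open>auto intro!: map_cong\<close>)
qed

lemma readout_op_eq:
  assumes lm: "length m' = N" and es: "es \<in> idx m'" and b: "b \<in> idx d"
  shows "chain_op (map2 (*) m' d) 0 (readout_kraus_list es) w b = w (idx_join d es b)"
proof -
  have les: "length es = N" using es lm idx_length by fastforce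
  have up: "chain_dims (map2 (*) m' d) 0 (readout_kraus_list es) = d"
    using lm les by (simp add: chain_dims_full readout_kraus_list_def) (intro nth_equalityI, auto)
  have "chain_op (map2 (*) m' d) 0 (readout_kraus_list es) w b =
      (\<Sum>ys\<in>idx (map2 (*) m' d). (\<Prod>i<N. snd (readout_kraus_list es!i) (b!i) (ys!i)) * w ys)"
    using chain_op_full[of "readout_kraus_list es" "map2 (*) m' d" b w] b up lm les by (simp add: readout_kraus_list_def)
  also have "\<dots> = (\<Sum>ys\<in>idx (map2 (*) m' d). if ys = idx_join d es b then w ys else 0)"
  proof (intro sum.cong refl)
    fix ys assume ys: "ys \<in> idx (map2 (*) m' d)"
    have lys: "length ys = N" using ys lm idx_length by fastforce
    have "(\<Prod>i<N. snd (readout_kraus_list es!i) (b!i) (ys!i)) = (\<Prod>i<N. if ys!i = es!i * d!i + b!i then 1 else 0)"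
      using les by (intro prod.cong refl) (simp add: readout_kraus_list_nth readout_kraus_def)
    also have "\<dots> = (if \<forall>i<N. ys!i = es!i * d!i + b!i then \<Prod>i<N. 1 else 0)"
      by (rule prod_if_all)
    also have "(\<forall>i<N. ys!i = es!i * d!i + b!i) \<longleftrightarrow> ys = idx_join d es b"
      using lys by (auto simp: list_eq_iff_nth_eq)
    finally show "(\<Prod>i<N. snd (readout_kraus_list es!i) (b!i) (ys!i)) * w ys = (if ys = idx_join d es b then w ys else 0)"
      by simp
  qed
  also have "\<dots> = w (idx_join d es b)"
    using idx_join_in_idx[OF es b] lm by (simp add: sum.delta')
  finally show ?thesis .
qed

lemma wf_locc_readout:
  assumes lm: "length m' = N"
  shows "wf_locc (map2 (*) m' d) (readout d (map2 (*) m' d))"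
  unfolding readout_def
proof (rule wf_locc_chain)
  show "0 + N \<le> length (map2 (*) m' d)" using lm by simp
  show "\<forall>i<N. complete_instrument (map2 (*) m' d ! (0 + i)) (map (\<lambda>e. (d ! (0 + i), readout_kraus d (0 + i) e)) [0..<map2 (*) m' d ! (0 + i) div d ! (0 + i)])"
    using lm dpos complete_readout_kraus by simp
qed

end

context pos_dims begin

definition lifted_leaves :: "locc \<Rightarrow> (nat list \<times> (cvec \<Rightarrow> cvec)) list" where
  "lifted_leaves t = leaves M2 (lift_locc d (conj_locc t))"
definition fwd_leaf :: "locc \<Rightarrow> nat \<Rightarrow> nat list \<Rightarrow> (nat list \<times> (cvec \<Rightarrow> cvec))" where
  "fwd_leaf t l es = (d, chain_op (fst (lifted_leaves t ! l)) 0 (readout_kraus_list es) \<circ> snd (lifted_leaves t ! l) \<circ> entangle_op)"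
definition fwd_leaves :: "locc \<Rightarrow> (nat \<Rightarrow> nat) \<Rightarrow> ((nat list \<times> (cvec \<Rightarrow> cvec)) \<times> nat) list" where
  "fwd_leaves t lab = concat (map (\<lambda>l. map (\<lambda>es. (fwd_leaf t l es, lab l))
    (product_lists (map (\<lambda>x. [0..<x]) (fst (leaves m t ! l))))) [0..<length (leaves m t)])"

lemma lifted_leaves_rel:
  assumes wft: "wf_locc m t"
  shows "length (lifted_leaves t) = length (leaves m t)"
    and "\<And>l. l < length (leaves m t) \<Longrightarrow> lifted_leaf d (lifted_leaves t ! l) (fst (leaves m t ! l), conjv \<circ> snd (leaves m t ! l) \<circ> conjv)"
proof -
  have r: "list_all2 (lifted_leaf d) (lifted_leaves t) (leaves m (conj_locc t))"
    unfolding lifted_leaves_def using wf_locc_conj_locc[OF wft] len dpos by (intro leaves_lift_locc) auto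
  then show "length (lifted_leaves t) = length (leaves m t)" by (simp add: list_all2_lengthD leaves_conj_locc)
  fix l assume l: "l < length (leaves m t)"
  have "lifted_leaf d (lifted_leaves t ! l) (leaves m (conj_locc t) ! l)"
    using r l by (simp add: list_all2_conv_all_nth leaves_conj_locc del: nth_map)
  then show "lifted_leaf d (lifted_leaves t ! l) (fst (leaves m t ! l), conjv \<circ> snd (leaves m t ! l) \<circ> conjv)"
    using l by (simp add: leaves_conj_locc case_prod_beta)
qed

lemma leaf_matrix_map:
  assumes wft: "wf_locc m t" and l: "l < length (leaves m t)"
  shows "matrix_map m (fst (leaves m t ! l)) (snd (leaves m t ! l))" "length (fst (leaves m t ! l)) = N"
  using matrix_map_leaves[OF wft, of "fst (leaves m t ! l)" "snd (leaves m t ! l)"] l len by auto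

lemma fst_lifted_leaves:
  assumes wft: "wf_locc m t" and l: "l < length (leaves m t)"
  shows "fst (lifted_leaves t ! l) = map2 (*) (fst (leaves m t ! l)) d"
  using lifted_leaves_rel(2)[OF wft l] by (simp add: lifted_leaf_def)

lemma wf_locc_forward_protocol:
  assumes wft: "wf_locc m t"
  shows "wf_locc d' (forward_protocol d' d t)"
  unfolding forward_protocol_def
proof (rule wf_locc_graft[OF wf_locc_entangle_chain], simp add: leaves_entangle_chain, rule wf_locc_graft)
  show "wf_locc M2 (lift_locc d (conj_locc t))" using wf_locc_lift_locc[OF wf_locc_conj_locc[OF wft]] len dpos by simp
  show "\<forall>p\<in>set (leaves M2 (lift_locc d (conj_locc t))). wf_locc (fst p) (readout d (fst p))"
  proof
    fix p assume "p \<in> set (leaves M2 (lift_locc d (conj_locc t)))"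
    then obtain l where l: "l < length (lifted_leaves t)" "p = lifted_leaves t ! l" by (auto simp: lifted_leaves_def in_set_conv_nth)
    then have l': "l < length (leaves m t)" using lifted_leaves_rel(1)[OF wft] by simp
    show "wf_locc (fst p) (readout d (fst p))"
      using wf_locc_readout[OF leaf_matrix_map(2)[OF wft l']] fst_lifted_leaves[OF wft l'] l by simp
  qed
qed

lemma leaves_forward_protocol:
  assumes wft: "wf_locc m t"
  shows "map fst (fwd_leaves t lab) = leaves d' (forward_protocol d' d t)"
proof -
  let ?L = "leaves m t"
  have "leaves d' (forward_protocol d' d t) = map (\<lambda>(e,G). (e, G \<circ> entangle_op))
      (concat (map (\<lambda>p. map (\<lambda>(e,G). (e, G \<circ> snd p)) (leaves (fst p) (readout d (fst p)))) (lifted_leaves t)))"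
    by (simp add: forward_protocol_def leaves_graft leaves_entangle_chain lifted_leaves_def case_prod_beta) (simp add: split_def)
  also have "lifted_leaves t = map (\<lambda>l. lifted_leaves t ! l) [0..<length ?L]"
    using lifted_leaves_rel(1)[OF wft] by (metis map_nth)
  also have "map (\<lambda>p. map (\<lambda>(e,G). (e, G \<circ> snd p)) (leaves (fst p) (readout d (fst p)))) (map (\<lambda>l. lifted_leaves t ! l) [0..<length ?L])
      = map (\<lambda>l. map (\<lambda>es. (d, chain_op (fst (lifted_leaves t ! l)) 0 (readout_kraus_list es) \<circ> snd (lifted_leaves t ! l))) (product_lists (map (\<lambda>x. [0..<x]) (fst (?L ! l))))) [0..<length ?L]"
    unfolding map_map
  proof (rule map_cong[OF refl], simp only: o_apply)
    fix l assume "l \<in> set [0..<length ?L]"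
    then have l: "l < length ?L" by simp
    show "map (\<lambda>(e,G). (e, G \<circ> snd (lifted_leaves t ! l))) (leaves (fst (lifted_leaves t ! l)) (readout d (fst (lifted_leaves t ! l))))
      = map (\<lambda>es. (d, chain_op (fst (lifted_leaves t ! l)) 0 (readout_kraus_list es) \<circ> snd (lifted_leaves t ! l))) (product_lists (map (\<lambda>x. [0..<x]) (fst (?L ! l))))"
      unfolding fst_lifted_leaves[OF wft l] leaves_readout[OF leaf_matrix_map(2)[OF wft l]] by simp
  qed
  finally show ?thesis by (simp add: fwd_leaves_def fwd_leaf_def map_concat o_def)
qed

lemma sum_fwd_leaves:
  "sum_list (map (\<lambda>(x,lb). if lb = i then f x else 0) (fwd_leaves t lab))
   = (\<Sum>l | l < length (leaves m t) \<and> lab l = i. \<Sum>es\<in>idx (fst (leaves m t ! l)). f (fwd_leaf t l es))"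
proof -
  have "sum_list (map (\<lambda>(x,lb). if lb = i then f x else 0) (fwd_leaves t lab))
     = sum_list (map (\<lambda>l. if lab l = i then (\<Sum>es\<in>idx (fst (leaves m t ! l)). f (fwd_leaf t l es)) else 0) [0..<length (leaves m t)])"
    unfolding fwd_leaves_def
    by (simp add: map_concat sum_list_concat o_def) (intro arg_cong[where f=sum_list] map_cong refl, simp add: sum_list_product_lists_upt[symmetric])
  also have "\<dots> = (\<Sum>l\<in>{0..<length (leaves m t)}. if lab l = i then (\<Sum>es\<in>idx (fst (leaves m t ! l)). f (fwd_leaf t l es)) else 0)"
    by (simp add: interv_sum_list_conv_sum_set_nat)
  also have "\<dots> = (\<Sum>l | l < length (leaves m t) \<and> lab l = i. \<Sum>es\<in>idx (fst (leaves m t ! l)). f (fwd_leaf t l es))"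
    by (subst sum.inter_filter[symmetric]) (auto intro!: sum.cong)
  finally show ?thesis .
qed

lemma set_product_lists_upt_idx: "es \<in> set (product_lists (map (upt 0) ds)) \<Longrightarrow> es \<in> idx ds"
  by (auto simp: product_lists_set idx_def list_all2_conv_all_nth)

lemma set_fwd_leaves: "x \<in> set (fwd_leaves t lab) \<Longrightarrow> \<exists>l es. l < length (leaves m t) \<and> es \<in> idx (fst (leaves m t ! l)) \<and> x = (fwd_leaf t l es, lab l)"
  unfolding fwd_leaves_def by (fastforce dest: set_product_lists_upt_idx)

lemma fst_fwd_leaf: "fst (fwd_leaf t l es) = d" by (simp add: fwd_leaf_def)

lemma idx_lo_in_idx: "x \<in> idx m \<Longrightarrow> idx_lo d x \<in> idx d"
  using dpos len by (auto simp: idx_def idx_lo_def)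

lemma sum_tensorv_unit_vectors:
  assumes "x \<in> idx m"
  shows "(\<Sum>b\<in>idx d. w b * tensorv d Phi (\<lambda>y. if y = b then 1 else 0) x) = tensorv d Phi w x"
proof -
  have "(\<Sum>b\<in>idx d. w b * tensorv d Phi (\<lambda>y. if y = b then 1 else 0) x)
      = (\<Sum>b\<in>idx d. if b = idx_lo d x then Phi (idx_hi d x) * w b else 0)"
    by (intro sum.cong refl) (auto simp: tensorv_eq)
  also have "\<dots> = tensorv d Phi w x"
    using idx_lo_in_idx[OF assms] by (simp add: sum.delta tensorv_eq)
  finally show ?thesis .
qed

lemma fwd_leaf_apply:
  assumes wft: "wf_locc m t" and l: "l < length (leaves m t)" and es: "es \<in> idx (fst (leaves m t ! l))"
    and b: "b \<in> idx d"
  shows "snd (fwd_leaf t l es) (conjv Phi) b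
           = complex_of_real kappa * cnj (snd (leaves m t ! l) (tensorv d Phi (\<lambda>y. if y = b then 1 else 0)) es)"
proof -
  define m' where "m' = fst (leaves m t ! l)"
  define G where "G = snd (leaves m t ! l)"
  have lm: "length m' = N" using leaf_matrix_map(2)[OF wft l] by (simp add: m'_def)
  have mr: "matrix_map m m' G" using leaf_matrix_map(1)[OF wft l] by (simp add: m'_def G_def)
  have es': "es \<in> idx m'" using es by (simp add: m'_def)
  have "snd (fwd_leaf t l es) (conjv Phi) b = snd (lifted_leaves t ! l) (entangle_op (conjv Phi)) (idx_join d es b)"
    using readout_op_eq[OF lm es' b] fst_lifted_leaves[OF wft l] by (simp add: fwd_leaf_def m'_def)
  also have "\<dots> = cnj (G (conjv (\<lambda>c. entangle_op (conjv Phi) (idx_join d c b))) es)"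
    using lifted_leaves_rel(2)[OF wft l] es' b by (simp add: lifted_leaf_def conjv_def m'_def G_def)
  also have "G (conjv (\<lambda>c. entangle_op (conjv Phi) (idx_join d c b))) es
      = G (\<lambda>c. complex_of_real kappa * tensorv d Phi (\<lambda>y. if y = b then 1 else 0) c) es"
    using entangle_op_eq[OF _ b] by (intro matrix_map_cong[OF mr _ es']) (simp add: conjv_def tensorv_eq)
  also have "\<dots> = complex_of_real kappa * G (tensorv d Phi (\<lambda>y. if y = b then 1 else 0)) es"
    by (rule matrix_map_scale[OF mr es'])
  finally show ?thesis by (simp add: G_def)
qed

lemma cinner_fwd_leaf:
  assumes wft: "wf_locc m t" and l: "l < length (leaves m t)" and es: "es \<in> idx (fst (leaves m t ! l))"
  shows "cinner d w (snd (fwd_leaf t l es) (conjv Phi)) = complex_of_real kappa * cnj (snd (leaves m t ! l) (tensorv d Phi w) es)"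
proof -
  let ?G = "snd (leaves m t ! l)" and ?e = "\<lambda>b y. if y = b then 1 else 0 :: complex"
  have mr: "matrix_map m (fst (leaves m t ! l)) ?G" by (rule leaf_matrix_map(1)[OF wft l])
  have "cinner d w (snd (fwd_leaf t l es) (conjv Phi))
      = (\<Sum>b\<in>idx d. cnj (w b) * (complex_of_real kappa * cnj (?G (tensorv d Phi (?e b)) es)))"
    unfolding cinner_def by (intro sum.cong refl) (simp add: fwd_leaf_apply[OF wft l es])
  also have "\<dots> = complex_of_real kappa * cnj (\<Sum>b\<in>idx d. w b * ?G (tensorv d Phi (?e b)) es)"
    by (simp add: sum_distrib_left mult_ac)
  also have "(\<Sum>b\<in>idx d. w b * ?G (tensorv d Phi (?e b)) es) = ?G (\<lambda>x. \<Sum>b\<in>idx d. w b * tensorv d Phi (?e b) x) es"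
    by (rule matrix_map_sum[OF mr finite_idx es, symmetric])
  also have "\<dots> = ?G (tensorv d Phi w) es"
    by (rule matrix_map_cong[OF mr _ es]) (rule sum_tensorv_unit_vectors)
  finally show ?thesis .
qed
end

section \<open>Unambiguous discrimination yields the transformation\<close>

lemma cnorm2_eq: "cnorm2 ds v = (\<Sum>x\<in>idx ds. (cmod (v x))\<^sup>2)"
  by (simp add: cnorm2_def cinner_self)

lemma cnorm2_nonneg: "cnorm2 ds v \<ge> 0"
  by (simp add: cnorm2_eq sum_nonneg)

lemma sum_cnorm2_eq_0_imp_zero:
  assumes "finite S" "(\<Sum>l\<in>S. cnorm2 (ds l) (v l)) = 0" "l \<in> S" "x \<in> idx (ds l)"
  shows "v l x = 0"
proof -
  have "cnorm2 (ds l) (v l) = 0"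
    using assms(1-3) by (subst (asm) sum_nonneg_eq_0_iff) (auto simp: cnorm2_nonneg)
  then have "(cmod (v l x))\<^sup>2 = 0"
    using assms(4) by (simp add: cnorm2_eq sum_nonneg_eq_0_iff)
  then show ?thesis by simp
qed

lemma locc_transforms_of_proportional_leaves:
  assumes wf: "wf_locc ds T"
    and dims: "\<And>n. n < length (leaves ds T) \<Longrightarrow> lab n \<in> {1..D} \<Longrightarrow> fst (leaves ds T ! n) = dout"
    and proportional: "\<And>n b. n < length (leaves ds T) \<Longrightarrow> lab n \<in> {1..D} \<Longrightarrow> b \<in> idx dout \<Longrightarrow>
                 snd (leaves ds T ! n) v b = \<alpha> n * \<phi> (lab n) b"
  shows "locc_transforms ds v dout D \<phi> (\<lambda>i. \<Sum>n | n < length (leaves ds T) \<and> lab n = i. (cmod (\<alpha> n))\<^sup>2)"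
  unfolding locc_transforms_def Let_def
proof (intro exI[of _ T] exI[of _ lab] conjI ballI allI impI)
  let ?L = "leaves ds T"
  show "wf_locc ds T" by (rule wf)
  fix i assume i: "i \<in> {1..D}"
  show "fst (?L ! n) = dout" if "n < length ?L" "lab n = i" for n
    using dims that i by blast
  fix xs ys assume xs: "xs \<in> idx dout" and ys: "ys \<in> idx dout"
  have "(\<Sum>n | n < length ?L \<and> lab n = i. outer (snd (?L ! n) v) (snd (?L ! n) v) xs ys)
      = (\<Sum>n | n < length ?L \<and> lab n = i. complex_of_real ((cmod (\<alpha> n))\<^sup>2) * outer (\<phi> i) (\<phi> i) xs ys)"
  proof (intro sum.cong refl)
    fix n assume "n \<in> {n. n < length ?L \<and> lab n = i}"
    then have n: "n < length ?L" "lab n \<in> {1..D}" "lab n = i" using i by auto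
    have "outer (snd (?L ! n) v) (snd (?L ! n) v) xs ys = (\<alpha> n * \<phi> i xs) * cnj (\<alpha> n * \<phi> i ys)"
      using proportional[OF n(1,2) xs] proportional[OF n(1,2) ys] by (simp only: outer_def n(3))
    also have "\<dots> = (\<alpha> n * cnj (\<alpha> n)) * outer (\<phi> i) (\<phi> i) xs ys"
      by (simp only: outer_def complex_cnj_mult mult_ac)
    finally show "outer (snd (?L ! n) v) (snd (?L ! n) v) xs ys
        = complex_of_real ((cmod (\<alpha> n))\<^sup>2) * outer (\<phi> i) (\<phi> i) xs ys"
      by (simp only: complex_norm_square)
  qed
  then show "(\<Sum>n | n < length ?L \<and> lab n = i. outer (snd (?L ! n) v) (snd (?L ! n) v) xs ys)
      = complex_of_real (\<Sum>n | n < length ?L \<and> lab n = i. (cmod (\<alpha> n))\<^sup>2) * outer (\<phi> i) (\<phi> i) xs ys"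
    by (simp add: sum_distrib_right)
qed

locale dual_setting = pos_dims d d' + dual_basis d D \<psi> \<psi>t for d d' :: "nat list" and D \<psi> \<psi>t
begin

lemma fwd_leaf_dual_multiple:
  assumes wft: "wf_locc m t" and l: "l < length (leaves m t)" and es: "es \<in> idx (fst (leaves m t ! l))"
    and i: "i \<in> {1..D}"
    and kills: "\<And>j. j \<in> {1..D} \<Longrightarrow> j \<noteq> i \<Longrightarrow> snd (leaves m t ! l) (tensorv d Phi (\<psi> j)) es = 0"
    and b: "b \<in> idx d"
  shows "snd (fwd_leaf t l es) (conjv Phi) b
           = cinner d (\<psi>t i) (snd (fwd_leaf t l es) (conjv Phi)) * \<psi>t i b"
proof (rule orth_others_imp_dual_multiple[OF i _ b])
  fix j assume "j \<in> {1..D}" "j \<noteq> i"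
  then show "cinner d (\<psi> j) (snd (fwd_leaf t l es) (conjv Phi)) = 0"
    using cinner_fwd_leaf[OF wft l es] kills by simp
qed

lemma fwd_leaf_weight:
  assumes wft: "wf_locc m t" and l: "l < length (leaves m t)" and es: "es \<in> idx (fst (leaves m t ! l))"
    and i: "i \<in> {1..D}"
    and kills: "\<And>j. j \<in> {1..D} \<Longrightarrow> j \<noteq> i \<Longrightarrow> snd (leaves m t ! l) (tensorv d Phi (\<psi> j)) es = 0"
  shows "kappa\<^sup>2 * (cmod (snd (leaves m t ! l) (tensorv d Phi (\<psi> i)) es))\<^sup>2
           \<le> (cmod (cinner d (\<psi>t i) (snd (fwd_leaf t l es) (conjv Phi))))\<^sup>2"
proof -
  define v where "v = snd (fwd_leaf t l es) (conjv Phi)"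
  define \<alpha> where "\<alpha> = cinner d (\<psi>t i) v"
  have "cinner d (\<psi> i) v = cinner d (\<psi> i) (\<lambda>b. \<alpha> * \<psi>t i b)"
    using fwd_leaf_dual_multiple[OF wft l es i kills] by (intro cinner_cong) (simp_all add: v_def \<alpha>_def)
  then have dual_part: "cinner d (\<psi> i) v = \<alpha> * cinner d (\<psi> i) (\<psi>t i)"
    by (simp add: cinner_scale)
  have "kappa\<^sup>2 * (cmod (snd (leaves m t ! l) (tensorv d Phi (\<psi> i)) es))\<^sup>2 = (cmod (cinner d (\<psi> i) v))\<^sup>2"
    using cinner_fwd_leaf[OF wft l es] by (simp add: v_def kappa_nonneg norm_mult power_mult_distrib)
  also have "\<dots> = (cmod \<alpha>)\<^sup>2 * (cmod (cinner d (\<psi> i) (\<psi>t i)))\<^sup>2"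
    by (simp add: dual_part norm_mult power_mult_distrib)
  also have "\<dots> \<le> (cmod \<alpha>)\<^sup>2"
    using mult_left_mono[OF cmod_cinner_psi_dual_le1[OF i], of "(cmod \<alpha>)\<^sup>2"] by simp
  finally show ?thesis by (simp add: \<alpha>_def v_def)
qed

lemma forward_protocol_transforms:
  assumes wft: "wf_locc m t"
    and kills: "\<And>l es j. l < length (leaves m t) \<Longrightarrow> lab l \<in> {1..D} \<Longrightarrow> es \<in> idx (fst (leaves m t ! l)) \<Longrightarrow>
                  j \<in> {1..D} \<Longrightarrow> j \<noteq> lab l \<Longrightarrow> snd (leaves m t ! l) (tensorv d Phi (\<psi> j)) es = 0"
  shows "locc_transforms d' (conjv Phi) d D \<psi>t
           (\<lambda>i. \<Sum>l | l < length (leaves m t) \<and> lab l = i. \<Sum>es\<in>idx (fst (leaves m t ! l)).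
                   (cmod (cinner d (\<psi>t i) (snd (fwd_leaf t l es) (conjv Phi))))\<^sup>2)"
proof -
  let ?L = "leaves m t" and ?F = "forward_protocol d' d t"
  define LL where "LL = fwd_leaves t lab"
  have LL_leaves: "map fst LL = leaves d' ?F"
    unfolding LL_def by (rule leaves_forward_protocol[OF wft])
  define \<alpha> where "\<alpha> n = cinner d (\<psi>t (snd (LL!n))) (snd (leaves d' ?F ! n) (conjv Phi))" for n
  have "locc_transforms d' (conjv Phi) d D \<psi>t
          (\<lambda>i. \<Sum>n | n < length (leaves d' ?F) \<and> snd (LL!n) = i. (cmod (\<alpha> n))\<^sup>2)"
  proof (rule locc_transforms_of_proportional_leaves[OF wf_locc_forward_protocol[OF wft]])
    fix n assume n: "n < length (leaves d' ?F)" and i: "snd (LL!n) \<in> {1..D}"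
    then obtain l es where l: "l < length ?L" "es \<in> idx (fst (?L ! l))" "LL!n = (fwd_leaf t l es, lab l)"
      using set_fwd_leaves[of "LL!n" t lab] LL_leaves[symmetric] unfolding LL_def by (metis length_map nth_mem)
    show "fst (leaves d' ?F ! n) = d"
      using n l(3) LL_leaves[symmetric] by (simp add: fst_fwd_leaf)
    fix b assume b: "b \<in> idx d"
    have "snd (fwd_leaf t l es) (conjv Phi) b
        = cinner d (\<psi>t (snd (LL!n))) (snd (fwd_leaf t l es) (conjv Phi)) * \<psi>t (snd (LL!n)) b"
      using kills[OF l(1) _ l(2)] i l(3) by (intro fwd_leaf_dual_multiple[OF wft l(1,2) i _ b]) auto
    then show "snd (leaves d' ?F ! n) (conjv Phi) b = \<alpha> n * \<psi>t (snd (LL!n)) b"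
      using l(3) n LL_leaves[symmetric] by (simp add: \<alpha>_def)
  qed
  moreover have "(\<Sum>n | n < length (leaves d' ?F) \<and> snd (LL!n) = i. (cmod (\<alpha> n))\<^sup>2)
      = (\<Sum>l | l < length ?L \<and> lab l = i. \<Sum>es\<in>idx (fst (?L ! l)).
           (cmod (cinner d (\<psi>t i) (snd (fwd_leaf t l es) (conjv Phi))))\<^sup>2)" for i
  proof -
    let ?w = "\<lambda>x. (cmod (cinner d (\<psi>t i) (snd x (conjv Phi))))\<^sup>2"
    have "(\<Sum>n | n < length (leaves d' ?F) \<and> snd (LL!n) = i. (cmod (\<alpha> n))\<^sup>2)
        = (\<Sum>n | n < length (map fst LL) \<and> snd (LL!n) = i. ?w (map fst LL ! n))"
      unfolding \<alpha>_def LL_leaves by (intro sum.cong) auto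
    also have "\<dots> = sum_list (map (\<lambda>(x, lb). if lb = i then ?w x else 0) LL)"
      by (rule sum_labelled_sum_list)
    also have "\<dots> = (\<Sum>l | l < length ?L \<and> lab l = i. \<Sum>es\<in>idx (fst (?L ! l)). ?w (fwd_leaf t l es))"
      unfolding LL_def by (rule sum_fwd_leaves)
    finally show ?thesis .
  qed
  ultimately show ?thesis by simp
qed

lemma forward_direction:
  assumes "locc_unamb_prob m D (\<lambda>i. tensorv d Phi (\<psi> i)) eps"
  shows "\<exists>p. (\<forall>i\<in>{1..D}. p i \<ge> eps i / real D) \<and> locc_transforms d' (conjv Phi) d D \<psi>t p"
proof -
  obtain t lab where wft: "wf_locc m t"
    and ident: "\<And>i j. i \<in> {1..D} \<Longrightarrow> j \<in> {1..D} \<Longrightarrow>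
       (\<Sum>l | l < length (leaves m t) \<and> lab l = i. cnorm2 (fst (leaves m t ! l)) (snd (leaves m t ! l) (tensorv d Phi (\<psi> j))))
         = (if i = j then eps i else 0)"
    using assms unfolding locc_unamb_prob_def Let_def by blast
  let ?L = "leaves m t"
  have kills: "snd (?L ! l) (tensorv d Phi (\<psi> j)) es = 0"
    if "l < length ?L" "lab l \<in> {1..D}" "es \<in> idx (fst (?L ! l))" "j \<in> {1..D}" "j \<noteq> lab l" for l es j
  proof -
    have "(\<Sum>l'\<in>{l'. l' < length ?L \<and> lab l' = lab l}. cnorm2 (fst (?L ! l')) (snd (?L ! l') (tensorv d Phi (\<psi> j)))) = 0"
      using ident[OF that(2,4)] that(5) by simp
    from sum_cnorm2_eq_0_imp_zero[OF _ this] show ?thesis using that(1,3) by simp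
  qed
  define p where "p i = (\<Sum>l | l < length ?L \<and> lab l = i. \<Sum>es\<in>idx (fst (?L ! l)).
                          (cmod (cinner d (\<psi>t i) (snd (fwd_leaf t l es) (conjv Phi))))\<^sup>2)" for i
  have "p i \<ge> eps i / real D" if i: "i \<in> {1..D}" for i
  proof -
    have "eps i / real D = kappa\<^sup>2 * eps i" using kappa_sq D_def by simp
    also have "\<dots> = (\<Sum>l | l < length ?L \<and> lab l = i. \<Sum>es\<in>idx (fst (?L ! l)).
                      kappa\<^sup>2 * (cmod (snd (?L ! l) (tensorv d Phi (\<psi> i)) es))\<^sup>2)"
      using ident[OF i i] by (simp add: cnorm2_eq sum_distrib_left[symmetric])
    also have "\<dots> \<le> p i" unfolding p_def
    proof (intro sum_mono)
      fix l es assume "l \<in> {l. l < length ?L \<and> lab l = i}" and es: "es \<in> idx (fst (?L ! l))"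
      then have l: "l < length ?L" "lab l = i" by auto
      show "kappa\<^sup>2 * (cmod (snd (?L ! l) (tensorv d Phi (\<psi> i)) es))\<^sup>2
          \<le> (cmod (cinner d (\<psi>t i) (snd (fwd_leaf t l es) (conjv Phi))))\<^sup>2"
        using kills[OF l(1) _ es] l(2) i by (intro fwd_leaf_weight[OF wft l(1) es i]) auto
    qed
    finally show ?thesis .
  qed
  moreover have "locc_transforms d' (conjv Phi) d D \<psi>t p"
    unfolding p_def using kills by (rule forward_protocol_transforms[OF wft])
  ultimately show ?thesis by blast
qed
end

section \<open>The Bell test and the backward protocol\<close>

text \<open>bell_amp d k is the normalised maximally entangled vector of C^(d_k) \<otimes> C^(d_k); the instrument
  bell_instrument projects onto it or onto its orthogonal complement.\<close>
definition bell_amp :: "nat list \<Rightarrow> nat \<Rightarrow> nat \<Rightarrow> complex" where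
  "bell_amp d k y = (if y div d!k = y mod d!k then complex_of_real (1 / sqrt (real (d!k))) else 0)"

definition bell_kraus :: "nat list \<Rightarrow> nat \<Rightarrow> cmat" where "bell_kraus d k = (\<lambda>r y. bell_amp d k y)"
definition bell_fail_kraus :: "nat list \<Rightarrow> nat \<Rightarrow> cmat" where
  "bell_fail_kraus d k = (\<lambda>r y. (if r = y then 1 else 0) - bell_amp d k r * bell_amp d k y)"
definition bell_instrument :: "nat list \<Rightarrow> nat \<Rightarrow> (nat \<times> cmat) list" where
  "bell_instrument d k = [(1, bell_kraus d k), (d!k * d!k, bell_fail_kraus d k)]"
definition bell_test :: "nat list \<Rightarrow> locc" where "bell_test d = chain (bell_instrument d) 0 (length d)"

lemma cnj_bell_amp[simp]: "cnj (bell_amp d k y) = bell_amp d k y"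
  by (simp add: bell_amp_def)

lemma bell_amp_sq_sum:
  assumes dk: "d!k > 0"
  shows "(\<Sum>r<d!k * d!k. bell_amp d k r * bell_amp d k r) = 1"
proof -
  let ?n = "d!k"
  have sq: "complex_of_real (1 / sqrt (real ?n)) * complex_of_real (1 / sqrt (real ?n)) = 1 / of_nat ?n"
  proof -
    have "(1 / sqrt (real ?n)) * (1 / sqrt (real ?n)) = 1 / real ?n" using dk by (simp add: divide_simps)
    then show ?thesis by (metis of_real_mult of_real_divide of_real_1 of_real_of_nat_eq)
  qed
  have "(\<Sum>r<?n * ?n. bell_amp d k r * bell_amp d k r) = (\<Sum>c<?n. \<Sum>s<?n. bell_amp d k (c*?n+s) * bell_amp d k (c*?n+s))"
    by (rule sum_lessThan_mult_split[OF dk])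
  also have "\<dots> = (\<Sum>c<?n. \<Sum>s<?n. if c = s then 1 / of_nat ?n else 0)"
    using dk sq by (intro sum.cong refl) (auto simp: bell_amp_def)
  also have "\<dots> = (\<Sum>c<?n. 1 / (of_nat ?n :: complex))" by (intro sum.cong refl) (simp add: sum.delta)
  also have "\<dots> = 1" using dk by simp
  finally show ?thesis .
qed

lemma sum_delta_l: "(i::nat) < n \<Longrightarrow> (\<Sum>r<n. (if r = i then 1 else 0) * f r) = (f i :: complex)"
  by (simp add: if_distrib[of "\<lambda>x. x * _"] sum.delta cong: if_cong)
lemma sum_delta_r: "(i::nat) < n \<Longrightarrow> (\<Sum>r<n. f r * (if r = i then 1 else 0)) = (f i :: complex)"
  by (simp add: if_distrib[of "\<lambda>x. _ * x"] sum.delta cong: if_cong)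

lemma complete_bell_instrument:
  assumes dk: "d!k > 0"
  shows "complete_instrument (d!k * d!k) (bell_instrument d k)"
  unfolding complete_instrument_def
proof (intro allI impI)
  fix i j assume ij: "i < d!k * d!k" "j < d!k * d!k"
  let ?n = "d!k" and ?a = "bell_amp d k"
  have "(\<Sum>r<?n*?n. cnj (bell_fail_kraus d k r i) * bell_fail_kraus d k r j)
     = (\<Sum>r<?n*?n. (if r = i then 1 else 0) * (if r = j then 1 else 0) - (if r = i then 1 else 0) * (?a r * ?a j)
            - (?a r * ?a i) * (if r = j then 1 else 0) + (?a r * ?a r) * (?a i * ?a j))"
    by (intro sum.cong refl) (simp add: bell_fail_kraus_def algebra_simps)
  also have "\<dots> = (if i = j then 1 else 0) - ?a i * ?a j - ?a j * ?a i + (\<Sum>r<?n*?n. ?a r * ?a r) * (?a i * ?a j)"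
  proof -
    have e1: "(\<Sum>r<?n*?n. (if r = i then 1 else 0) * (if r = j then 1 else 0)) = (if i = j then 1 else (0::complex))"
      using sum_delta_l[OF ij(1), of "\<lambda>r. if r = j then 1 else 0"] by simp
    have e2: "(\<Sum>r<?n*?n. (if r = i then 1 else 0) * (?a r * ?a j)) = ?a i * ?a j"
      by (rule sum_delta_l[OF ij(1)])
    have e3: "(\<Sum>r<?n*?n. (?a r * ?a i) * (if r = j then 1 else 0)) = ?a j * ?a i"
      by (rule sum_delta_r[OF ij(2)])
    have e4: "(\<Sum>r<?n*?n. (?a r * ?a r) * (?a i * ?a j)) = (\<Sum>r<?n*?n. ?a r * ?a r) * (?a i * ?a j)"
      by (simp add: sum_distrib_right)
    show ?thesis by (simp only: sum.distrib sum_subtractf e1 e2 e3 e4)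
  qed
  also have "\<dots> = (if i = j then 1 else 0) - ?a i * ?a j" using bell_amp_sq_sum[OF dk] by (simp add: mult.commute)
  finally have "(\<Sum>r<?n*?n. cnj (bell_fail_kraus d k r i) * bell_fail_kraus d k r j) = (if i = j then 1 else 0) - ?a i * ?a j" .
  then show "(\<Sum>br\<leftarrow>bell_instrument d k. \<Sum>r<fst br. cnj (snd br r i) * snd br r j) = (if i = j then 1 else 0)"
    by (simp add: bell_instrument_def bell_kraus_def)
qed

lemma wf_locc_bell_test: "\<forall>k<length d. d!k > 0 \<Longrightarrow> wf_locc (map2 (*) d d) (bell_test d)"
  unfolding bell_test_def by (intro wf_locc_chain) (auto intro: complete_bell_instrument)

lemma product_lists_hd: "(\<forall>xs\<in>set xss. xs \<noteq> []) \<Longrightarrow>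
   product_lists xss \<noteq> [] \<and> hd (product_lists xss) = map hd xss"
proof (induction xss)
  case Nil then show ?case by simp
next
  case (Cons xs xss)
  then obtain y ys where xs: "xs = y # ys" by (cases xs) auto
  from Cons show ?case by (auto simp: xs hd_append hd_map)
qed

lemma idx_join_Cons: "idx_join (x#d) (c#cs) (s#bs) = (c*x+s) # idx_join d cs bs"
  by (simp add: idx_join_def upt_conv_Cons map_Suc_upt[symmetric] del: upt_Suc)

lemma sum_idx_join:
  "length m = length d \<Longrightarrow> (\<forall>k<length d. d!k > 0) \<Longrightarrow>
   (\<Sum>ys\<in>idx (map2 (*) m d). f ys) = (\<Sum>c\<in>idx m. \<Sum>b\<in>idx d. f (idx_join d c b))"
proof (induction m d arbitrary: f rule: list_induct2)
  case Nil then show ?case by (simp add: idx_join_def)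
next
  case (Cons a m x d)
  have x: "x > 0" using Cons.prems by force
  have dp: "\<forall>k<length d. d!k > 0" using Cons.prems by force
  have "(\<Sum>ys\<in>idx (map2 (*) (a#m) (x#d)). f ys) = (\<Sum>j<a*x. \<Sum>ys\<in>idx (map2 (*) m d). f (j#ys))"
    by (simp add: sum_idx_Cons)
  also have "\<dots> = (\<Sum>c0<a. \<Sum>s<x. \<Sum>ys\<in>idx (map2 (*) m d). f ((c0*x+s)#ys))"
    by (rule sum_lessThan_mult_split[OF x])
  also have "\<dots> = (\<Sum>c0<a. \<Sum>s<x. \<Sum>c\<in>idx m. \<Sum>b\<in>idx d. f ((c0*x+s) # idx_join d c b))"
    using Cons.IH[OF dp] by simp
  also have "\<dots> = (\<Sum>c0<a. \<Sum>c\<in>idx m. \<Sum>s<x. \<Sum>b\<in>idx d. f ((c0*x+s) # idx_join d c b))"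
    by (intro sum.cong refl) (rule sum.swap)
  also have "\<dots> = (\<Sum>c\<in>idx (a#m). \<Sum>b\<in>idx (x#d). f (idx_join (x#d) c b))"
    by (simp add: sum_idx_Cons idx_join_Cons)
  finally show ?case .
qed

context pos_dims begin

definition bell_kraus_list :: "(nat \<times> cmat) list" where
  "bell_kraus_list = map (\<lambda>k. (1::nat, bell_kraus d k)) [0..<N]"
definition bell_op :: "cvec \<Rightarrow> cvec" where
  "bell_op = chain_op (map2 (*) d d) 0 bell_kraus_list"

lemma leaves_bell_test: "leaves (map2 (*) d d) (bell_test d) \<noteq> [] \<and>
   hd (leaves (map2 (*) d d) (bell_test d)) = (replicate N 1, bell_op)"
proof -
  have "product_lists (map (bell_instrument d) [0..<0+N]) \<noteq> [] \<and> hd (product_lists (map (bell_instrument d) [0..<0+N])) = map hd (map (bell_instrument d) [0..<N])"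
    using product_lists_hd[of "map (bell_instrument d) [0..<N]"] by (auto simp: bell_instrument_def)
  moreover have "map hd (map (bell_instrument d) [0..<N]) = bell_kraus_list" by (simp add: bell_kraus_list_def bell_instrument_def)
  moreover have "chain_dims (map2 (*) d d) 0 bell_kraus_list = replicate N 1"
    by (simp add: chain_dims_full bell_kraus_list_def) (intro nth_equalityI, auto)
  ultimately show ?thesis unfolding bell_test_def leaves_chain by (simp add: hd_map bell_op_def)
qed

lemma idx_replicate_1: "idx (replicate n 1) = {replicate n 0}"
  by (auto simp: idx_def intro: nth_equalityI)

lemma bell_op_eq: "bell_op w (replicate N 0) = complex_of_real kappa * (\<Sum>x\<in>idx d. w (idx_join d x x))"
proof -
  have up: "chain_dims (map2 (*) d d) 0 bell_kraus_list = replicate N 1"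
    by (simp add: chain_dims_full bell_kraus_list_def) (intro nth_equalityI, auto)
  have "bell_op w (replicate N 0) = (\<Sum>ys\<in>idx (map2 (*) d d). (\<Prod>i<N. snd (bell_kraus_list!i) (replicate N 0 ! i) (ys!i)) * w ys)"
    unfolding bell_op_def using chain_op_full[of bell_kraus_list "map2 (*) d d" "replicate N 0" w] up idx_replicate_1 by (simp add: bell_kraus_list_def)
  also have "\<dots> = (\<Sum>c\<in>idx d. \<Sum>b\<in>idx d. (\<Prod>i<N. snd (bell_kraus_list!i) 0 (idx_join d c b!i)) * w (idx_join d c b))"
    using dpos by (simp add: sum_idx_join)
  also have "\<dots> = (\<Sum>c\<in>idx d. \<Sum>b\<in>idx d. if b = c then complex_of_real kappa * w (idx_join d c b) else 0)"
  proof (intro sum.cong refl)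
    fix c b assume c: "c \<in> idx d" and b: "b \<in> idx d"
    have lc: "length c = N" "length b = N" using c b idx_length by fastforce+
    have "(\<Prod>i<N. snd (bell_kraus_list!i) 0 (idx_join d c b!i)) = (\<Prod>i<N. if c!i = b!i then complex_of_real (1 / sqrt (real (d!i))) else 0)"
    proof (intro prod.cong refl)
      fix i assume i: "i \<in> {..<N}"
      have "c!i < d!i" "b!i < d!i" using c b i idx_nth by fastforce+
      then have "(c!i * d!i + b!i) div d!i = c!i" "(c!i * d!i + b!i) mod d!i = b!i" by simp_all
      then show "snd (bell_kraus_list!i) 0 (idx_join d c b!i) = (if c!i = b!i then complex_of_real (1 / sqrt (real (d!i))) else 0)"
        using i by (simp add: bell_kraus_list_def bell_kraus_def bell_amp_def)
    qed
    also have "\<dots> = (if \<forall>i<N. c!i = b!i then \<Prod>i<N. complex_of_real (1 / sqrt (real (d!i))) else 0)"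
      by (rule prod_if_all)
    also have "(\<forall>i<N. c!i = b!i) \<longleftrightarrow> b = c" using lc by (auto simp: list_eq_iff_nth_eq)
    finally show "(\<Prod>i<N. snd (bell_kraus_list!i) 0 (idx_join d c b!i)) * w (idx_join d c b) = (if b = c then complex_of_real kappa * w (idx_join d c b) else 0)"
      by (simp add: kappa_def)
  qed
  also have "\<dots> = (\<Sum>c\<in>idx d. complex_of_real kappa * w (idx_join d c c))"
    by (intro sum.cong refl) (simp add: sum.delta)
  finally show ?thesis by (simp add: sum_distrib_left)
qed

end

context dual_setting begin

definition bell_at :: "nat list \<Rightarrow> locc" where
  "bell_at ds = (if ds = map2 (*) d d then bell_test d else Leaf)"
definition back_lifted_leaves :: "locc \<Rightarrow> (nat list \<times> (cvec \<Rightarrow> cvec)) list" where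
  "back_lifted_leaves t = leaves m (lift_locc d (conj_locc t))"
definition bell_leaves :: "locc \<Rightarrow> nat \<Rightarrow> (nat list \<times> (cvec \<Rightarrow> cvec)) list" where
  "bell_leaves t l = leaves (fst (back_lifted_leaves t ! l)) (bell_at (fst (back_lifted_leaves t ! l)))"
definition backward_protocol :: "locc \<Rightarrow> locc" where
  "backward_protocol t = graft m (lift_locc d (conj_locc t)) bell_at"
text \<open>Only the first leaf of the Bell test, where every party finds the maximally entangled vector,
  keeps the label of the underlying leaf; every other outcome is inconclusive.\<close>
definition back_leaves :: "locc \<Rightarrow> (nat \<Rightarrow> nat) \<Rightarrow> ((nat list \<times> (cvec \<Rightarrow> cvec)) \<times> nat) list" where
  "back_leaves t lab = concat (map (\<lambda>l. map (\<lambda>n. ((fst (bell_leaves t l ! n), snd (bell_leaves t l ! n) \<circ> snd (back_lifted_leaves t ! l)),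
      if lab l \<in> {1..D} \<and> n = 0 then lab l else D+1)) [0..<length (bell_leaves t l)]) [0..<length (leaves d' t)])"

lemma back_lifted_leaves_rel:
  assumes wft: "wf_locc d' t"
  shows "length (back_lifted_leaves t) = length (leaves d' t)"
    and "\<And>l. l < length (leaves d' t) \<Longrightarrow> lifted_leaf d (back_lifted_leaves t ! l) (fst (leaves d' t ! l), conjv \<circ> snd (leaves d' t ! l) \<circ> conjv)"
proof -
  have r: "list_all2 (lifted_leaf d) (back_lifted_leaves t) (leaves d' (conj_locc t))"
    unfolding back_lifted_leaves_def using wf_locc_conj_locc[OF wft] len dpos by (intro leaves_lift_locc) auto
  then show "length (back_lifted_leaves t) = length (leaves d' t)" by (simp add: list_all2_lengthD leaves_conj_locc)
  fix l assume l: "l < length (leaves d' t)"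
  have "lifted_leaf d (back_lifted_leaves t ! l) (leaves d' (conj_locc t) ! l)"
    using r l by (simp add: list_all2_conv_all_nth leaves_conj_locc del: nth_map)
  then show "lifted_leaf d (back_lifted_leaves t ! l) (fst (leaves d' t ! l), conjv \<circ> snd (leaves d' t ! l) \<circ> conjv)"
    using l by (simp add: leaves_conj_locc case_prod_beta)
qed

lemma back_leaf_matrix_map:
  assumes wft: "wf_locc d' t" and l: "l < length (leaves d' t)"
  shows "matrix_map d' (fst (leaves d' t ! l)) (snd (leaves d' t ! l))" "length (fst (leaves d' t ! l)) = N"
  using matrix_map_leaves[OF wft, of "fst (leaves d' t ! l)" "snd (leaves d' t ! l)"] l len by auto

lemma wf_locc_backward_protocol:
  assumes wft: "wf_locc d' t"
  shows "wf_locc m (backward_protocol t)"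
  unfolding backward_protocol_def
proof (rule wf_locc_graft)
  show "wf_locc m (lift_locc d (conj_locc t))" using wf_locc_lift_locc[OF wf_locc_conj_locc[OF wft]] len dpos by simp
  show "\<forall>p\<in>set (leaves m (lift_locc d (conj_locc t))). wf_locc (fst p) (bell_at (fst p))"
    using wf_locc_bell_test[OF dpos] by (auto simp: bell_at_def intro: wf_locc.wf_Leaf)
qed

lemma bell_leaves_nonempty: "bell_leaves t l \<noteq> []"
  using leaves_bell_test by (simp add: bell_leaves_def bell_at_def)

lemma leaves_backward_protocol:
  assumes wft: "wf_locc d' t"
  shows "map fst (back_leaves t lab) = leaves m (backward_protocol t)"
proof -
  have "leaves m (backward_protocol t) = concat (map (\<lambda>p. map (\<lambda>(e,G). (e, G \<circ> snd p)) (leaves (fst p) (bell_at (fst p)))) (back_lifted_leaves t))"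
    by (simp add: backward_protocol_def leaves_graft back_lifted_leaves_def split_def)
  also have "back_lifted_leaves t = map (\<lambda>l. back_lifted_leaves t ! l) [0..<length (leaves d' t)]"
    using back_lifted_leaves_rel(1)[OF wft] by (metis map_nth)
  finally have e: "leaves m (backward_protocol t) = concat (map (\<lambda>l. map (\<lambda>(e,G). (e, G \<circ> snd (back_lifted_leaves t ! l))) (bell_leaves t l)) [0..<length (leaves d' t)])"
    by (simp add: bell_leaves_def comp_def)
  have "map (\<lambda>(e,G). (e, G \<circ> snd (back_lifted_leaves t ! l))) (bell_leaves t l)
      = map (\<lambda>n. (fst (bell_leaves t l ! n), snd (bell_leaves t l ! n) \<circ> snd (back_lifted_leaves t ! l))) [0..<length (bell_leaves t l)]" for l
    by (subst (1) map_nth[symmetric]) (simp add: case_prod_beta)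
  then show ?thesis unfolding e back_leaves_def by (simp add: map_concat o_def)
qed

lemma sum_back_leaves:
  assumes i: "i \<in> {1..D}"
  shows "sum_list (map (\<lambda>(x,lb). if lb = i then f x else 0) (back_leaves t lab))
   = (\<Sum>l | l < length (leaves d' t) \<and> lab l = i. f (fst (bell_leaves t l ! 0), snd (bell_leaves t l ! 0) \<circ> snd (back_lifted_leaves t ! l)))"
proof -
  have inner_sum: "sum_list (map (\<lambda>(x,lb). if lb = i then f x else 0) (map (\<lambda>n. ((fst (bell_leaves t l ! n), snd (bell_leaves t l ! n) \<circ> snd (back_lifted_leaves t ! l)),
      if lab l \<in> {1..D} \<and> n = 0 then lab l else D+1)) [0..<length (bell_leaves t l)]))
     = (if lab l = i then f (fst (bell_leaves t l ! 0), snd (bell_leaves t l ! 0) \<circ> snd (back_lifted_leaves t ! l)) else 0)" for l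
  proof -
    have "sum_list (map (\<lambda>(x,lb). if lb = i then f x else 0) (map (\<lambda>n. ((fst (bell_leaves t l ! n), snd (bell_leaves t l ! n) \<circ> snd (back_lifted_leaves t ! l)),
      if lab l \<in> {1..D} \<and> n = 0 then lab l else D+1)) [0..<length (bell_leaves t l)]))
     = (\<Sum>n\<in>{0..<length (bell_leaves t l)}. if n = 0 then (if lab l = i then f (fst (bell_leaves t l ! 0), snd (bell_leaves t l ! 0) \<circ> snd (back_lifted_leaves t ! l)) else 0) else 0)"
    proof -
      have "map (\<lambda>(x,lb). if lb = i then f x else 0) (map (\<lambda>n. ((fst (bell_leaves t l ! n), snd (bell_leaves t l ! n) \<circ> snd (back_lifted_leaves t ! l)),
          if lab l \<in> {1..D} \<and> n = 0 then lab l else D+1)) [0..<length (bell_leaves t l)])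
        = map (\<lambda>n. if n = 0 then (if lab l = i then f (fst (bell_leaves t l ! 0), snd (bell_leaves t l ! 0) \<circ> snd (back_lifted_leaves t ! l)) else 0) else 0) [0..<length (bell_leaves t l)]"
        unfolding map_map by (intro map_cong refl) (use i in auto)
      then show ?thesis by (simp only: interv_sum_list_conv_sum_set_nat set_upt)
    qed
    also have "\<dots> = (if lab l = i then f (fst (bell_leaves t l ! 0), snd (bell_leaves t l ! 0) \<circ> snd (back_lifted_leaves t ! l)) else 0)"
      using bell_leaves_nonempty[of t l] by (simp add: sum.delta)
    finally show ?thesis .
  qed
  have "sum_list (map (\<lambda>(x,lb). if lb = i then f x else 0) (back_leaves t lab))
     = (\<Sum>l\<in>{0..<length (leaves d' t)}. if lab l = i then f (fst (bell_leaves t l ! 0), snd (bell_leaves t l ! 0) \<circ> snd (back_lifted_leaves t ! l)) else 0)"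
  proof -
    have sc: "sum_list (map F (concat xss)) = sum_list (map (\<lambda>xs. sum_list (map F xs)) xss)" for F :: "_ \<Rightarrow> 'z::comm_monoid_add" and xss
      by (induction xss) auto
    show ?thesis unfolding back_leaves_def sc map_map
      by (simp only: interv_sum_list_conv_sum_set_nat set_upt) (intro sum.cong refl, simp only: o_apply inner_sum)
  qed
  also have "\<dots> = (\<Sum>l | l < length (leaves d' t) \<and> lab l = i. f (fst (bell_leaves t l ! 0), snd (bell_leaves t l ! 0) \<circ> snd (back_lifted_leaves t ! l)))"
    by (subst sum.inter_filter[symmetric]) (auto intro!: sum.cong)
  finally show ?thesis .
qed

lemma labels_back_leaves: "x \<in> set (back_leaves t lab) \<Longrightarrow> snd x \<in> {1..D+1}"
  by (auto simp: back_leaves_def)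

lemma sum_backward_protocol_labelled:
  assumes wft: "wf_locc d' t" and i: "i \<in> {1..D}"
  shows "(\<Sum>n | n < length (leaves m (backward_protocol t)) \<and> snd (back_leaves t lab ! n) = i.
            h (leaves m (backward_protocol t) ! n))
       = (\<Sum>l | l < length (leaves d' t) \<and> lab l = i.
            h (fst (bell_leaves t l ! 0), snd (bell_leaves t l ! 0) \<circ> snd (back_lifted_leaves t ! l)))"
proof -
  have "(\<Sum>n | n < length (leaves m (backward_protocol t)) \<and> snd (back_leaves t lab ! n) = i.
            h (leaves m (backward_protocol t) ! n))
      = sum_list (map (\<lambda>(x, lb). if lb = i then h x else 0) (back_leaves t lab))"
    unfolding leaves_backward_protocol[OF wft, where lab=lab, symmetric] by (rule sum_labelled_sum_list)
  also have "\<dots> = (\<Sum>l | l < length (leaves d' t) \<and> lab l = i.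
            h (fst (bell_leaves t l ! 0), snd (bell_leaves t l ! 0) \<circ> snd (back_lifted_leaves t ! l)))"
    by (rule sum_back_leaves[OF i])
  finally show ?thesis .
qed

end

lemma sum_cmod_cinner_sq_outer:
  assumes S: "finite S"
    and rel: "\<And>y x. y \<in> idx d \<Longrightarrow> x \<in> idx d \<Longrightarrow> (\<Sum>l\<in>S. w l y * cnj (w l x)) = complex_of_real P * (u y * cnj (u x))"
  shows "(\<Sum>l\<in>S. (cmod (cinner d (w l) phi))\<^sup>2) = P * (cmod (cinner d u phi))\<^sup>2"
proof -
  have nsq: "complex_of_real ((cmod z)\<^sup>2) = z * cnj z" for z by (rule complex_norm_square)
  have zz: "cinner d v phi * cnj (cinner d v phi) = (\<Sum>x\<in>idx d. \<Sum>y\<in>idx d. phi x * cnj (phi y) * (v y * cnj (v x)))" for v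
    by (simp add: cinner_def sum_product mult_ac)
  have "complex_of_real (\<Sum>l\<in>S. (cmod (cinner d (w l) phi))\<^sup>2) = (\<Sum>l\<in>S. cinner d (w l) phi * cnj (cinner d (w l) phi))"
    by (simp only: of_real_sum nsq)
  also have "\<dots> = (\<Sum>l\<in>S. \<Sum>x\<in>idx d. \<Sum>y\<in>idx d. phi x * cnj (phi y) * (w l y * cnj (w l x)))"
    by (simp add: zz)
  also have "\<dots> = (\<Sum>x\<in>idx d. \<Sum>y\<in>idx d. phi x * cnj (phi y) * (\<Sum>l\<in>S. w l y * cnj (w l x)))"
    by (simp add: sum_distrib_left) (subst sum.swap, rule sum.cong[OF refl], rule sum.swap)
  also have "\<dots> = (\<Sum>x\<in>idx d. \<Sum>y\<in>idx d. phi x * cnj (phi y) * (complex_of_real P * (u y * cnj (u x))))"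
    by (intro sum.cong refl) (simp add: rel)
  also have "\<dots> = complex_of_real P * (cinner d u phi * cnj (cinner d u phi))"
    by (simp add: zz sum_distrib_left mult_ac)
  also have "\<dots> = complex_of_real (P * (cmod (cinner d u phi))\<^sup>2)"
    by (simp only: of_real_mult nsq)
  finally show ?thesis by (simp only: of_real_eq_iff)
qed

context dual_setting begin

lemma idx_split_join: "c \<in> idx d' \<Longrightarrow> x \<in> idx d \<Longrightarrow> idx_hi d (idx_join d c x) = c \<and> idx_lo d (idx_join d c x) = x"
proof -
  assume c: "c \<in> idx d'" and x: "x \<in> idx d"
  have lc: "length c = N" using c len idx_length by fastforce
  have lx: "length x = N" using x idx_length by fastforce
  have "x!k < d!k" if "k < N" for k using x that idx_nth by fastforce
  then show ?thesis using lc lx dpos by (auto simp: idx_hi_def idx_lo_def intro!: nth_equalityI)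
qed

lemma back_lifted_op_eq:
  assumes wft: "wf_locc d' t" and l: "l < length (leaves d' t)" and ld: "fst (leaves d' t ! l) = d"
    and x: "x \<in> idx d"
  shows "snd (back_lifted_leaves t ! l) (tensorv d Phi v) (idx_join d x x) = v x * cnj (snd (leaves d' t ! l) (conjv Phi) x)"
proof -
  define G where "G = snd (leaves d' t ! l)"
  have mr: "matrix_map d' d G" using back_leaf_matrix_map(1)[OF wft l] ld by (simp add: G_def)
  have rel: "lifted_leaf d (back_lifted_leaves t ! l) (d, conjv \<circ> G \<circ> conjv)" using back_lifted_leaves_rel(2)[OF wft l] ld by (simp add: G_def)
  have "snd (back_lifted_leaves t ! l) (tensorv d Phi v) (idx_join d x x) = (conjv \<circ> G \<circ> conjv) (\<lambda>c. tensorv d Phi v (idx_join d c x)) x"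
    using rel x by (simp add: lifted_leaf_def)
  also have "\<dots> = cnj (G (conjv (\<lambda>c. tensorv d Phi v (idx_join d c x))) x)" by (simp add: conjv_def)
  also have "G (conjv (\<lambda>c. tensorv d Phi v (idx_join d c x))) x = G (\<lambda>c. cnj (v x) * conjv Phi c) x"
    by (rule matrix_map_cong[OF mr _ x]) (simp add: conjv_def tensorv_eq idx_split_join x)
  also have "\<dots> = cnj (v x) * G (conjv Phi) x" by (rule matrix_map_scale[OF mr x])
  finally show ?thesis by (simp add: G_def)
qed

lemma cnorm2_bell_success:
  assumes wft: "wf_locc d' t" and l: "l < length (leaves d' t)" and ld: "fst (leaves d' t ! l) = d"
  shows "cnorm2 (fst (bell_leaves t l ! 0)) ((snd (bell_leaves t l ! 0) \<circ> snd (back_lifted_leaves t ! l)) (tensorv d Phi v))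
           = kappa\<^sup>2 * (cmod (cinner d (snd (leaves d' t ! l) (conjv Phi)) v))\<^sup>2"
proof -
  have "fst (back_lifted_leaves t ! l) = map2 (*) d d"
    using back_lifted_leaves_rel(2)[OF wft l] ld by (simp add: lifted_leaf_def)
  then have success: "bell_leaves t l ! 0 = (replicate N 1, bell_op)"
    using leaves_bell_test hd_conv_nth[of "leaves (map2 (*) d d) (bell_test d)"]
    by (simp add: bell_leaves_def bell_at_def)
  have "bell_op (snd (back_lifted_leaves t ! l) (tensorv d Phi v)) (replicate N 0)
      = complex_of_real kappa * (\<Sum>x\<in>idx d. snd (back_lifted_leaves t ! l) (tensorv d Phi v) (idx_join d x x))"
    by (rule bell_op_eq)
  also have "(\<Sum>x\<in>idx d. snd (back_lifted_leaves t ! l) (tensorv d Phi v) (idx_join d x x))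
      = cinner d (snd (leaves d' t ! l) (conjv Phi)) v"
    unfolding cinner_def by (intro sum.cong refl) (simp add: back_lifted_op_eq[OF wft l ld] mult.commute)
  finally show ?thesis
    using idx_replicate_1[of N] kappa_nonneg by (simp add: success cnorm2_eq norm_mult power_mult_distrib)
qed

lemma backward_protocol_identifies:
  assumes wft: "wf_locc d' t"
    and dims: "\<And>l. l < length (leaves d' t) \<Longrightarrow> lab l \<in> {1..D} \<Longrightarrow> fst (leaves d' t ! l) = d"
    and gram: "\<And>i xs ys. i \<in> {1..D} \<Longrightarrow> xs \<in> idx d \<Longrightarrow> ys \<in> idx d \<Longrightarrow>
       (\<Sum>l | l < length (leaves d' t) \<and> lab l = i.
          outer (snd (leaves d' t ! l) (conjv Phi)) (snd (leaves d' t ! l) (conjv Phi)) xs ys)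
         = complex_of_real (p i) * outer (\<psi>t i) (\<psi>t i) xs ys"
    and i: "i \<in> {1..D}" and j: "j \<in> {1..D}"
  shows "(\<Sum>n | n < length (leaves m (backward_protocol t)) \<and> snd (back_leaves t lab ! n) = i.
            cnorm2 (fst (leaves m (backward_protocol t) ! n))
                   (snd (leaves m (backward_protocol t) ! n) (tensorv d Phi (\<psi> j))))
       = (if i = j then kappa\<^sup>2 * p i * (cmod (cinner d (\<psi>t i) (\<psi> i)))\<^sup>2 else 0)"
proof -
  let ?L = "leaves d' t" and ?h = "\<lambda>x. cnorm2 (fst x) (snd x (tensorv d Phi (\<psi> j)))"
  define w where "w l = snd (?L ! l) (conjv Phi)" for l
  have "(\<Sum>n | n < length (leaves m (backward_protocol t)) \<and> snd (back_leaves t lab ! n) = i.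
            ?h (leaves m (backward_protocol t) ! n))
      = (\<Sum>l | l < length ?L \<and> lab l = i.
            ?h (fst (bell_leaves t l ! 0), snd (bell_leaves t l ! 0) \<circ> snd (back_lifted_leaves t ! l)))"
    by (rule sum_backward_protocol_labelled[OF wft i])
  also have "\<dots> = (\<Sum>l | l < length ?L \<and> lab l = i. kappa\<^sup>2 * (cmod (cinner d (w l) (\<psi> j)))\<^sup>2)"
  proof (intro sum.cong refl)
    fix l assume "l \<in> {l. l < length ?L \<and> lab l = i}"
    then have l: "l < length ?L" "lab l = i" by auto
    then have "fst (?L ! l) = d" using dims i by blast
    then show "?h (fst (bell_leaves t l ! 0), snd (bell_leaves t l ! 0) \<circ> snd (back_lifted_leaves t ! l))
        = kappa\<^sup>2 * (cmod (cinner d (w l) (\<psi> j)))\<^sup>2"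
      unfolding w_def by (simp only: fst_conv snd_conv cnorm2_bell_success[OF wft l(1)])
  qed
  also have "\<dots> = kappa\<^sup>2 * (p i * (cmod (cinner d (\<psi>t i) (\<psi> j)))\<^sup>2)"
  proof -
    have "(\<Sum>l | l < length ?L \<and> lab l = i. (cmod (cinner d (w l) (\<psi> j)))\<^sup>2) = p i * (cmod (cinner d (\<psi>t i) (\<psi> j)))\<^sup>2"
    proof (rule sum_cmod_cinner_sq_outer)
      fix y x assume "y \<in> idx d" "x \<in> idx d"
      then show "(\<Sum>l | l < length ?L \<and> lab l = i. w l y * cnj (w l x)) = complex_of_real (p i) * (\<psi>t i y * cnj (\<psi>t i x))"
        using gram[OF i] by (simp add: outer_def w_def)
    qed simp
    then show ?thesis by (simp add: sum_distrib_left[symmetric])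
  qed
  also have "\<dots> = (if i = j then kappa\<^sup>2 * p i * (cmod (cinner d (\<psi>t i) (\<psi> i)))\<^sup>2 else 0)"
  proof (cases "i = j")
    case False
    then have "cinner d (\<psi>t i) (\<psi> j) = 0" using dual i j by (metis cinner_sym complex_cnj_zero)
    then show ?thesis using False by simp
  qed simp
  finally show ?thesis .
qed

lemma backward_direction:
  assumes ppos: "\<forall>i\<in>{1..D}. p i > 0" and tr: "locc_transforms d' (conjv Phi) d D \<psi>t p"
  shows "locc_unamb_dist m D (\<lambda>i. tensorv d Phi (\<psi> i))"
proof -
  obtain t lab where wft: "wf_locc d' t"
    and TR: "\<And>i. i \<in> {1..D} \<Longrightarrow> (\<forall>l<length (leaves d' t). lab l = i \<longrightarrow> fst (leaves d' t ! l) = d) \<and>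
        (\<forall>xs\<in>idx d. \<forall>ys\<in>idx d.
           (\<Sum>l | l < length (leaves d' t) \<and> lab l = i.
              outer (snd (leaves d' t ! l) (conjv Phi)) (snd (leaves d' t ! l) (conjv Phi)) xs ys)
             = complex_of_real (p i) * outer (\<psi>t i) (\<psi>t i) xs ys)"
    using tr unfolding locc_transforms_def Let_def by blast
  define eps where "eps i = kappa\<^sup>2 * p i * (cmod (cinner d (\<psi>t i) (\<psi> i)))\<^sup>2" for i
  define LL where "LL = back_leaves t lab"
  have eps_pos: "eps i > 0" if i: "i \<in> {1..D}" for i
  proof -
    have "cinner d (\<psi>t i) (\<psi> i) \<noteq> 0"
      using cinner_psi_dual_nonzero[OF i] by (metis cinner_sym complex_cnj_zero_iff)
    moreover have "kappa\<^sup>2 > 0" using kappa_sq D_def i by simp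
    ultimately show ?thesis using ppos i by (simp add: eps_def)
  qed
  show ?thesis
    unfolding locc_unamb_dist_def locc_unamb_prob_def Let_def
  proof (intro exI[of _ eps] conjI ballI exI[of _ "backward_protocol t"] exI[of _ "\<lambda>n. snd (LL!n)"] allI impI)
    show "wf_locc m (backward_protocol t)" by (rule wf_locc_backward_protocol[OF wft])
    fix n assume "n < length (leaves m (backward_protocol t))"
    then have "LL!n \<in> set LL" using leaves_backward_protocol[OF wft, where lab=lab, symmetric] by (simp add: LL_def)
    then show "snd (LL!n) \<in> {1..D+1}" unfolding LL_def by (rule labels_back_leaves)
  next
    fix i j assume i: "i \<in> {1..D}" and j: "j \<in> {1..D}"
    show "(\<Sum>n | n < length (leaves m (backward_protocol t)) \<and> snd (LL!n) = i.
             cnorm2 (fst (leaves m (backward_protocol t) ! n)) (snd (leaves m (backward_protocol t) ! n) (tensorv d Phi (\<psi> j))))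
          = (if i = j then eps i else 0)"
      unfolding LL_def eps_def using TR by (intro backward_protocol_identifies[OF wft _ _ i j]) blast+
  qed (use eps_pos in blast)
qed

lemma D_pos: "D > 0"
proof -
  have "0 \<notin> set d" using dpos by (auto simp: in_set_conv_nth)
  then have "prod_list d \<noteq> 0" by (simp add: prod_list_zero_iff)
  then show ?thesis by (simp add: D_def)
qed

lemma unamb_dist_iff_transforms:
  "locc_unamb_dist m D (\<lambda>i. tensorv d Phi (\<psi> i))
     \<longleftrightarrow> (\<exists>p. (\<forall>i\<in>{1..D}. p i > 0) \<and> locc_transforms d' (conjv Phi) d D \<psi>t p)"
proof
  assume "locc_unamb_dist m D (\<lambda>i. tensorv d Phi (\<psi> i))"
  then obtain eps where eps: "\<forall>i\<in>{1..D}. eps i > 0"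
    and "locc_unamb_prob m D (\<lambda>i. tensorv d Phi (\<psi> i)) eps"
    unfolding locc_unamb_dist_def by blast
  then obtain p where p: "\<forall>i\<in>{1..D}. p i \<ge> eps i / real D" and "locc_transforms d' (conjv Phi) d D \<psi>t p"
    using forward_direction by blast
  moreover have "\<forall>i\<in>{1..D}. p i > 0"
    using eps p D_pos by (meson divide_pos_pos less_le_trans of_nat_0_less_iff)
  ultimately show "\<exists>p. (\<forall>i\<in>{1..D}. p i > 0) \<and> locc_transforms d' (conjv Phi) d D \<psi>t p"
    by blast
qed (use backward_direction in blast)

end

lemma locc_transforms_no_states: "locc_transforms ds v dout 0 \<phi> p"
  unfolding locc_transforms_def Let_def by (intro exI[of _ Leaf]) (simp add: wf_locc.wf_Leaf)

lemma locc_unamb_dist_no_states: "locc_unamb_dist ds 0 v"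
  unfolding locc_unamb_dist_def locc_unamb_prob_def Let_def
  by (intro exI[of _ "\<lambda>_. 1"] conjI exI[of _ Leaf] exI[of _ "\<lambda>_. 1"]) (simp_all add: wf_locc.wf_Leaf)

lemma pos_if_prod_list_nonzero:
  assumes "prod_list ds \<noteq> (0::nat)" "k < length ds"
  shows "ds ! k > 0"
proof -
  have "ds ! k \<in> set ds" using assms(2) by simp
  then show ?thesis using assms(1) by (metis gr0I prod_list_zero_iff)
qed

theorem theorem1:
  fixes d d' :: "nat list" and D :: nat and \<psi> \<psi>t :: "nat \<Rightarrow> cvec" and \<Phi> :: cvec
  assumes dims: "length d' = length d"
    and D_def: "D = prod_list d"
    and basis: "\<forall>c :: nat \<Rightarrow> complex.
                  (\<forall>is\<in>idx d. (\<Sum>i=1..D. c i * \<psi> i is) = 0) \<longrightarrow> (\<forall>i\<in>{1..D}. c i = 0)"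
    and psi_unit: "\<forall>i\<in>{1..D}. cinner d (\<psi> i) (\<psi> i) = 1"
    and dual: "\<forall>i\<in>{1..D}. cinner d (\<psi>t i) (\<psi>t i) = 1 \<and>
                 (\<forall>j\<in>{1..D}. j \<noteq> i \<longrightarrow> cinner d (\<psi> j) (\<psi>t i) = 0)"
    and Phi_unit: "cinner d' \<Phi> \<Phi> = 1"
  shows "(locc_unamb_dist (map2 (*) d' d) D (\<lambda>i. tensorv d \<Phi> (\<psi> i))
            \<longleftrightarrow> (\<exists>p. (\<forall>i\<in>{1..D}. p i > 0) \<and> locc_transforms d' (conjv \<Phi>) d D \<psi>t p))
       \<and> (\<forall>eps. (\<forall>i\<in>{1..D}. eps i > 0) \<and>
                 locc_unamb_prob (map2 (*) d' d) D (\<lambda>i. tensorv d \<Phi> (\<psi> i)) eps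
              \<longrightarrow> (\<exists>p. (\<forall>i\<in>{1..D}. p i \<ge> eps i / real D) \<and>
                       locc_transforms d' (conjv \<Phi>) d D \<psi>t p))"
proof (cases "D = 0")
  case True
  then show ?thesis using locc_unamb_dist_no_states locc_transforms_no_states by auto
next
  case False
  then interpret dual_setting d d' D \<psi> \<psi>t
    using dims D_def basis psi_unit dual by unfold_locales (auto simp: pos_if_prod_list_nonzero)
  show ?thesis using unamb_dist_iff_transforms forward_direction by blast
qed

end
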